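(* Let $\ell:\mathbb{R}\to\mathbb{R}$ be convex with $\ell\ge 0$ and $\min_v\ell(v)=0$. Let $Z\sim p_Z$ and $G\sim\mathcal{N}(0,1)$ independent, and assume $\mathbb{E}|\ell'_+(cG+Z)|^2<\infty$ for all $c\in\mathbb{R}$. Then: (1) $\mathbb{E}|e_\ell(cG+Z;\tau)-\ell(Z)|<\infty$ for all $c\in\mathbb{R},\tau>0$, so $L(c,\tau):=\mathbb{E}[e_\ell(cG+Z;\tau)-\ell(Z)]$ is well defined; $L$ is jointly convex and continuous on $\mathbb{R}\times\mathbb{R}_{>0}$. (2) With $\mathcal{L}(\mathbf{v})=\sum_{j=1}^m\ell(\mathbf{v}_j)$, $\mathbf{z}_j\stackrel{iid}{\sim}p_Z$ and $\mathbf{g}\sim\mathcal{N}(0,\mathbf{I}_m)$ independent, $\frac1m\{e_{\mathcal{L}}(c\mathbf{g}+\mathbf{z};\tau)-\mathcal{L}(\mathbf{z})\}\to L(c,\tau)$ in probability as $m\to\infty$, for all $c\in\mathbb{R},\tau>0$. (3) $\lim_{\tau\to0^+}L(c,\tau)=\mathbb{E}[\ell(cG+Z)-\ell(Z)]<\infty$, $\lim_{\tau\to0^+}L(0,\tau)=0$, and $-\infty<\lim_{\tau\to0^+}\partial_\tau L(0,\tau)\le0$. (4) With $L_0:=\mathbb{E}\ell(Z)\in[0,\infty]$: $\lim_{\tau\to+\infty}L(c,\tau)=-L_0$ and $L(c,\tau)\ge -L_0$ for all $c,\tau>0$; moreover $\lim_{\tau\to+\infty}L(c,\tau)/\tau=0$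 for all $c$.
   Context: For convex $g:\mathbb{R}\to\mathbb{R}$: $g'_+(v):=\sup_{s\in\partial g(v)}|s|$, $e_g(x;\tau):=\min_v\frac{1}{2\tau}(x-v)^2+g(v)$ ($\tau>0$). For $\mathcal{L}:\mathbb{R}^m\to\mathbb{R}$, $e_{\mathcal{L}}(\mathbf{x};\tau):=\min_{\mathbf{v}}\frac{1}{2\tau}\|\mathbf{x}-\mathbf{v}\|_2^2+\mathcal{L}(\mathbf{v})$. *)

theory Defs
  imports "HOL-Probability.Probability"
begin

definition subdiff :: "(real \<Rightarrow> real) \<Rightarrow> real \<Rightarrow> real set" where
  "subdiff g v = {s. \<forall>u. g u \<ge> g v + s * (u - v)}"

definition dplus :: "(real \<Rightarrow> real) \<Rightarrow> real \<Rightarrow> real" where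
  "dplus g v = (SUP s \<in> subdiff g v. \<bar>s\<bar>)"

definition moreau :: "(real \<Rightarrow> real) \<Rightarrow> real \<Rightarrow> real \<Rightarrow> real" where
  "moreau g x \<tau> = (INF v. (1 / (2 * \<tau>)) * (x - v)\<^sup>2 + g v)"

text \<open>Vectors of R^m are represented as functions nat => real, only the
  coordinates 0..m-1 being relevant (the others are fixed to 0 for the minimiser).\<close>
definition rvec :: "nat \<Rightarrow> (nat \<Rightarrow> real) set" where
  "rvec m = {v. \<forall>j\<ge>m. v j = 0}"

definition sqnorm :: "nat \<Rightarrow> (nat \<Rightarrow> real) \<Rightarrow> real" where
  "sqnorm m x = (\<Sum>j<m. (x j)\<^sup>2)"

definition moreau_vec :: "nat \<Rightarrow> ((nat \<Rightarrow> real) \<Rightarrow> real) \<Rightarrow> (nat \<Rightarrow> real) \<Rightarrow> real \<Rightarrow> real" where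
  "moreau_vec m F x \<tau> = (INF v \<in> rvec m. (1 / (2 * \<tau>)) * sqnorm m (\<lambda>j. x j - v j) + F v)"

definition sep_loss :: "(real \<Rightarrow> real) \<Rightarrow> nat \<Rightarrow> (nat \<Rightarrow> real) \<Rightarrow> real" where
  "sep_loss l m v = (\<Sum>j<m. l (v j))"

definition gauss :: "real measure" where
  "gauss = density lborel std_normal_density"

definition ZG :: "real measure \<Rightarrow> (real \<times> real) measure" where
  "ZG PZ = PZ \<Otimes>\<^sub>M gauss"

definition Lfun :: "(real \<Rightarrow> real) \<Rightarrow> real measure \<Rightarrow> real \<Rightarrow> real \<Rightarrow> real" where
  "Lfun l PZ c \<tau> = (\<integral>p. (moreau l (c * snd p + fst p) \<tau> - l (fst p)) \<partial>ZG PZ)"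

definition iidZG :: "real measure \<Rightarrow> (nat \<Rightarrow> real \<times> real) measure" where
  "iidZG PZ = (\<Pi>\<^sub>M j\<in>(UNIV::nat set). ZG PZ)"

definition conv_in_prob :: "'a measure \<Rightarrow> (nat \<Rightarrow> 'a \<Rightarrow> real) \<Rightarrow> real \<Rightarrow> bool" where
  "conv_in_prob M X a \<longleftrightarrow>
     (\<forall>m. X m \<in> borel_measurable M) \<and>
     (\<forall>\<epsilon>>0. (\<lambda>m. measure M {\<omega> \<in> space M. \<bar>X m \<omega> - a\<bar> > \<epsilon>}) \<longlonglongrightarrow> 0)"

end

theory Submission
  imports Defs
begin

text \<open>
  Everything reduces to pointwise facts about the scalar Moreau envelope \<open>e(x; \<tau>)\<close> of \<open>l\<close>,
  transported through the expectation by dominated convergence. With \<open>p\<close> the proximal point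
  and \<open>s = (x - p) / \<tau>\<close>, \<open>s\<close> is a subgradient of \<open>l\<close> at \<open>p\<close>, \<open>|s|\<close> is bounded by every
  subgradient of \<open>l\<close> at \<open>x\<close> and does not increase with \<open>\<tau>\<close>, and
  \<open>l(x) - \<tau> g\<^sup>2 / 2 \<le> e(x; \<tau>) \<le> l(x)\<close> for a subgradient \<open>g\<close> at \<open>x\<close>. Taking for \<open>g\<close> the right
  derivative, a measurable selection, all integrands are dominated by \<open>g\<^sup>2\<close>, which is integrable
  by the moment hypothesis. Joint convexity of \<open>e\<close> in \<open>(x, \<tau>)\<close> comes from the convexity of the
  perspective \<open>(a, t) \<mapsto> a\<^sup>2 / t\<close>, the derivative in \<open>\<tau>\<close> is \<open>- s\<^sup>2 / 2\<close>, and \<open>e(x; \<tau>)\<close> decreases to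
  \<open>0\<close> as \<open>\<tau> \<rightarrow> \<infinity>\<close>, which gives the behaviour at infinity (by monotone convergence when
  \<open>E l(Z) = \<infinity>\<close>). Finally the separable envelope is the sum of the scalar ones, so the
  convergence in probability is the weak law of large numbers, proved by truncation: Hoeffding's
  inequality for the bounded part and Markov's inequality for the tail.
\<close>

section \<open>Subgradients and the right derivative\<close>

lemma subdiff_abs_le_dplus:
  assumes "s \<in> subdiff g v"
  shows "\<bar>s\<bar> \<le> dplus g v"
  unfolding dplus_def
proof (rule cSUP_upper[OF assms])
  have "g v - g (v - 1) \<le> t \<and> t \<le> g (v + 1) - g v" if "t \<in> subdiff g v" for t
    using that unfolding subdiff_def by (auto dest: spec[of _ "v + 1"] spec[of _ "v - 1"])
  then show "bdd_above (abs ` subdiff g v)"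
    by (intro bdd_aboveI2[where M="\<bar>g (v + 1) - g v\<bar> + \<bar>g v - g (v - 1)\<bar>"]) fastforce
qed

lemma subdiff_monotone:
  assumes "s \<in> subdiff g a" "t \<in> subdiff g b"
  shows "0 \<le> (s - t) * (a - b)"
proof -
  have "g b \<ge> g a + s * (b - a)" "g a \<ge> g b + t * (a - b)"
    using assms unfolding subdiff_def by auto
  then show ?thesis by (simp add: algebra_simps)
qed

lemma diff_quotient_swap: "(a - b) / (c - d) = (b - a) / (d - (c::real))"
  by (metis minus_diff_eq minus_divide_divide)

locale convex_real_fun =
  fixes l :: "real \<Rightarrow> real"
  assumes convex: "convex_on UNIV l"
begin

lemma continuous_on_l: "continuous_on UNIV l"
  by (rule convex_on_continuous) (auto simp: convex)

lemma borel_measurable_l [measurable]: "l \<in> borel_measurable borel"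
  using continuous_on_l by (rule borel_measurable_continuous_onI)

lemma left_slope_le_right_slope:
  assumes "u < v" "0 < h"
  shows "(l v - l u) / (v - u) \<le> (l (v + h) - l v) / h"
proof -
  have "(l u - l v) / (u - v) \<le> (l v - l (v + h)) / (v - (v + h))"
    using convex_on_slope_le[OF convex, of u "v + h" v] assms by (auto intro: order_trans)
  then show ?thesis unfolding diff_quotient_swap[of "l u"] diff_quotient_swap[of "l v" "l (v + h)"] by simp
qed

lemma slope_mono:
  assumes "0 < h'" "h' \<le> h"
  shows "(l (v + h') - l v) / h' \<le> (l (v + h) - l v) / h"
  using convex_on_slope_le(1)[OF convex, of v "v + h" "v + h'"] assms
  by (cases "h' = h") (simp_all add: minus_divide_left)

definition rderiv :: "real \<Rightarrow> real" where
  "rderiv v = (INF h\<in>{0<..}. (l (v + h) - l v) / h)"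

lemma slopes_bdd_below: "bdd_below ((\<lambda>h. (l (v + h) - l v) / h) ` {0<..})"
  using left_slope_le_right_slope[of "v - 1" v] by (intro bdd_belowI2[where m="l v - l (v - 1)"]) auto

lemma rderiv_le_slope: "0 < h \<Longrightarrow> rderiv v \<le> (l (v + h) - l v) / h"
  unfolding rderiv_def by (rule cINF_lower[OF slopes_bdd_below]) auto

lemma slope_le_rderiv: "u < v \<Longrightarrow> (l v - l u) / (v - u) \<le> rderiv v"
  unfolding rderiv_def using left_slope_le_right_slope[of u v] by (intro cINF_greatest) auto

lemma rderiv_in_subdiff: "rderiv v \<in> subdiff l v"
  unfolding subdiff_def
proof safe
  fix u
  consider "v < u" | "u = v" | "u < v" by linarith
  then show "l v + rderiv v * (u - v) \<le> l u"
  proof cases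
    case 1
    then show ?thesis
      using rderiv_le_slope[of "u - v" v] by (simp add: le_divide_eq algebra_simps)
  next
    case 3
    then show ?thesis
      using slope_le_rderiv[of u v] by (simp add: divide_le_eq algebra_simps)
  qed simp
qed

lemma slope_tendsto_rderiv: "((\<lambda>h. (l (v + h) - l v) / h) \<longlongrightarrow> rderiv v) (at_right 0)"
proof -
  have "((\<lambda>h. (l (v + h) - l v) / h) \<longlongrightarrow> (INF h\<in>{0<..} \<inter> UNIV. (l (v + h) - l v) / h))
      (at 0 within {0<..} \<inter> UNIV)"
    using slope_mono left_slope_le_right_slope[of "v - 1" v] by (intro Lim_right_bound) auto
  then show ?thesis by (simp add: rderiv_def)
qed

lemma borel_measurable_rderiv [measurable]: "rderiv \<in> borel_measurable borel"
proof (rule borel_measurable_LIMSEQ_real)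
  have "filterlim (\<lambda>n. inverse (real (Suc n))) (at_right 0) sequentially"
    by (intro tendsto_imp_filterlim_at_right LIMSEQ_inverse_real_of_nat always_eventually) simp
  then show "(\<lambda>n. (l (v + inverse (real (Suc n))) - l v) / inverse (real (Suc n))) \<longlonglongrightarrow> rderiv v" for v
    by (rule filterlim_compose[OF slope_tendsto_rderiv])
  show "(\<lambda>v. (l (v + inverse (real (Suc n))) - l v) / inverse (real (Suc n))) \<in> borel_measurable borel" for n
    by measurable
qed

lemma abs_diff_le_rderiv: "\<bar>l y - l z\<bar> \<le> \<bar>y - z\<bar> * (\<bar>rderiv y\<bar> + \<bar>rderiv z\<bar>)"
proof -
  have "l y + rderiv y * (z - y) \<le> l z" "l z + rderiv z * (y - z) \<le> l y"
    using rderiv_in_subdiff[of y] rderiv_in_subdiff[of z] unfolding subdiff_def by blast+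
  moreover have "rderiv y * (y - z) \<le> \<bar>y - z\<bar> * \<bar>rderiv y\<bar>" "rderiv z * (z - y) \<le> \<bar>y - z\<bar> * \<bar>rderiv z\<bar>"
    by (metis abs_ge_self abs_mult mult.commute, metis abs_ge_self abs_minus_commute abs_mult mult.commute)
  moreover have "0 \<le> \<bar>y - z\<bar> * \<bar>rderiv y\<bar>" "0 \<le> \<bar>y - z\<bar> * \<bar>rderiv z\<bar>" by simp_all
  ultimately show ?thesis unfolding abs_le_iff distrib_left by (smt (verit) mult_minus_right minus_diff_eq)
qed

end

section \<open>The scalar Moreau envelope\<close>

lemma perspective_square_convex:
  fixes a b t1 t2 t :: real
  assumes "0 < t1" "0 < t2" "0 \<le> t" "t \<le> 1"
  shows "((1 - t) * a + t * b)\<^sup>2 / ((1 - t) * t1 + t * t2) \<le> (1 - t) * (a\<^sup>2 / t1) + t * (b\<^sup>2 / t2)"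
proof -
  have pos: "0 < (1 - t) * t1 + t * t2"
    using assms by (cases "t = 0") (auto intro: add_nonneg_pos)
  have "((1 - t) * (a\<^sup>2 / t1) + t * (b\<^sup>2 / t2)) * ((1 - t) * t1 + t * t2) - ((1 - t) * a + t * b)\<^sup>2
      = (1 - t) * t * (a * t2 - b * t1)\<^sup>2 / (t1 * t2)"
    using assms by (simp add: field_simps power2_eq_square)
  also have "\<dots> \<ge> 0" using assms by simp
  finally show ?thesis using pos by (simp add: divide_le_eq)
qed

locale nonneg_convex_real_fun = convex_real_fun +
  assumes nonneg: "\<And>v. 0 \<le> l v"
begin

definition prox_obj :: "real \<Rightarrow> real \<Rightarrow> real \<Rightarrow> real" where
  "prox_obj x \<tau> v = 1 / (2 * \<tau>) * (x - v)\<^sup>2 + l v"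

lemma moreau_eq_INF: "moreau l x \<tau> = (INF v. prox_obj x \<tau> v)"
  unfolding moreau_def prox_obj_def ..

lemma prox_obj_nonneg: "0 < \<tau> \<Longrightarrow> 0 \<le> prox_obj x \<tau> v"
  unfolding prox_obj_def using nonneg[of v] by simp

lemma moreau_le_prox_obj: "0 < \<tau> \<Longrightarrow> moreau l x \<tau> \<le> prox_obj x \<tau> v"
  unfolding moreau_eq_INF using prox_obj_nonneg by (intro cINF_lower bdd_belowI2) auto

lemma le_moreauI: "(\<And>v. a \<le> prox_obj x \<tau> v) \<Longrightarrow> a \<le> moreau l x \<tau>"
  unfolding moreau_eq_INF by (rule cINF_greatest) auto

lemma moreau_nonneg: "0 < \<tau> \<Longrightarrow> 0 \<le> moreau l x \<tau>"
  by (intro le_moreauI prox_obj_nonneg)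

lemma moreau_le: "0 < \<tau> \<Longrightarrow> moreau l x \<tau> \<le> l x"
  using moreau_le_prox_obj[of \<tau> x x] by (simp add: prox_obj_def)

text \<open>Completing the square in the subgradient inequality at \<open>x\<close>.\<close>
lemma moreau_ge:
  assumes "0 < \<tau>" "s \<in> subdiff l x"
  shows "l x - \<tau> * s\<^sup>2 / 2 \<le> moreau l x \<tau>"
proof (rule le_moreauI)
  fix v
  have "l x + s * (v - x) \<le> l v" using assms(2) unfolding subdiff_def by auto
  moreover have "0 \<le> (v - x + \<tau> * s)\<^sup>2 / (2 * \<tau>)" using assms(1) by simp
  moreover have "(v - x + \<tau> * s)\<^sup>2 / (2 * \<tau>) = 1 / (2 * \<tau>) * (x - v)\<^sup>2 + s * (v - x) + \<tau> * s\<^sup>2 / 2"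
    using assms(1) by (simp add: field_simps power2_eq_square)
  ultimately show "l x - \<tau> * s\<^sup>2 / 2 \<le> prox_obj x \<tau> v"
    unfolding prox_obj_def by linarith
qed

lemma abs_moreau_minus_le: "0 < \<tau> \<Longrightarrow> \<bar>moreau l x \<tau> - l x\<bar> \<le> \<tau> * (rderiv x)\<^sup>2 / 2"
  using moreau_ge[OF _ rderiv_in_subdiff, of \<tau> x] moreau_le[of \<tau> x] by (simp add: abs_le_iff)

text \<open>Outside the ball of radius \<open>2 \<tau> l x + 1\<close> around \<open>x\<close> the objective exceeds its value
  at \<open>x\<close>, so a minimiser on that compact ball is a global one.\<close>
lemma prox_obj_has_min:
  assumes "0 < \<tau>"
  shows "\<exists>p. \<forall>v. prox_obj x \<tau> p \<le> prox_obj x \<tau> v"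
proof -
  define R where "R = 2 * \<tau> * l x + 1"
  have "0 \<le> 2 * \<tau> * l x" using nonneg[of x] assms by simp
  moreover have "R\<^sup>2 = (2 * \<tau> * l x)\<^sup>2 + 2 * \<tau> * l x + R"
    unfolding R_def by (simp add: power2_eq_square algebra_simps)
  moreover have "0 \<le> (2 * \<tau> * l x)\<^sup>2" by simp
  ultimately have R: "0 < R" "2 * \<tau> * l x < R\<^sup>2"
    unfolding R_def by linarith+
  have "continuous_on (cball x R) (prox_obj x \<tau>)"
    unfolding prox_obj_def by (intro continuous_intros continuous_on_subset[OF continuous_on_l]) auto
  then obtain p where p: "p \<in> cball x R" "\<And>v. v \<in> cball x R \<Longrightarrow> prox_obj x \<tau> p \<le> prox_obj x \<tau> v"
    using continuous_attains_inf[OF compact_cball] R by (metis cball_eq_empty not_less order_less_imp_le)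
  have "prox_obj x \<tau> p \<le> prox_obj x \<tau> v" for v
  proof (cases "v \<in> cball x R")
    case False
    then have "R < \<bar>x - v\<bar>" by (simp add: dist_real_def)
    then have "R\<^sup>2 < \<bar>x - v\<bar>\<^sup>2" using R by (intro power_strict_mono) auto
    then have "prox_obj x \<tau> x < prox_obj x \<tau> v"
      using R assms mult_nonneg_nonneg[OF less_imp_le[OF assms] nonneg[of v]]
      by (simp add: prox_obj_def field_simps)
    then show ?thesis using p(2)[of x] R by simp
  qed (rule p(2))
  then show ?thesis by blast
qed

definition prox :: "real \<Rightarrow> real \<Rightarrow> real" where
  "prox x \<tau> = (SOME p. \<forall>v. prox_obj x \<tau> p \<le> prox_obj x \<tau> v)"

lemma prox_obj_prox_le: "0 < \<tau> \<Longrightarrow> prox_obj x \<tau> (prox x \<tau>) \<le> prox_obj x \<tau> v"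
  unfolding prox_def using someI_ex[OF prox_obj_has_min] by blast

lemma moreau_eq_prox_obj: "0 < \<tau> \<Longrightarrow> moreau l x \<tau> = prox_obj x \<tau> (prox x \<tau>)"
  by (intro antisym moreau_le_prox_obj le_moreauI prox_obj_prox_le)

definition prox_grad :: "real \<Rightarrow> real \<Rightarrow> real" where
  "prox_grad x \<tau> = (x - prox x \<tau>) / \<tau>"

lemma prox_eq: "0 < \<tau> \<Longrightarrow> prox x \<tau> = x - \<tau> * prox_grad x \<tau>"
  by (simp add: prox_grad_def)

text \<open>Along the segment from the proximal point \<open>p\<close> to \<open>u\<close>, the quadratic part of the objective
  changes to first order by \<open>- prox_grad x \<tau> * (u - p)\<close>, which convexity of \<open>l\<close> must compensate.\<close>
lemma prox_grad_in_subdiff: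
  assumes "0 < \<tau>"
  shows "prox_grad x \<tau> \<in> subdiff l (prox x \<tau>)"
  unfolding subdiff_def
proof safe
  fix u
  define p s where "p = prox x \<tau>" and "s = prox_grad x \<tau>"
  define C where "C = (u - p)\<^sup>2 / (2 * \<tau>)"
  have step: "s * (u - p) - t * C \<le> l u - l p" if t: "0 < t" "t \<le> 1" for t
  proof -
    have "l (p + t * (u - p)) \<le> (1 - t) * l p + t * l u"
      using convex_onD[OF convex, of t p u] t by (simp add: algebra_simps)
    moreover have "prox_obj x \<tau> p \<le> prox_obj x \<tau> (p + t * (u - p))"
      unfolding p_def by (rule prox_obj_prox_le[OF assms])
    moreover have "prox_obj x \<tau> (p + t * (u - p)) - l (p + t * (u - p)) - (prox_obj x \<tau> p - l p)
        = t * (t * C - s * (u - p))"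
      unfolding prox_obj_def C_def s_def p_def prox_grad_def using assms
      by (simp add: field_simps power2_eq_square)
    ultimately have "t * (s * (u - p) - t * C) \<le> t * (l u - l p)"
      by (simp add: algebra_simps)
    then show ?thesis using t by simp
  qed
  have "((\<lambda>t. s * (u - p) - t * C) \<longlongrightarrow> s * (u - p) - 0 * C) (at_right 0)"
    by (intro tendsto_intros)
  moreover have "\<forall>\<^sub>F t in at_right 0. s * (u - p) - t * C \<le> l u - l p"
    unfolding eventually_at_right_field by (intro exI[of _ 1]) (auto intro: step)
  ultimately have "s * (u - p) \<le> l u - l p"
    by (intro tendsto_upperbound[OF _ _ trivial_limit_at_right_real]) auto
  then show "l (prox x \<tau>) + prox_grad x \<tau> * (u - prox x \<tau>) \<le> l u"
    unfolding p_def s_def by simp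
qed

lemma abs_le_of_square_le:
  fixes a b :: real
  assumes "0 \<le> b" "a\<^sup>2 \<le> \<bar>a\<bar> * b"
  shows "\<bar>a\<bar> \<le> b"
proof (rule ccontr)
  assume "\<not> \<bar>a\<bar> \<le> b"
  then have "\<bar>a\<bar> * b < \<bar>a\<bar> * \<bar>a\<bar>" using assms(1) by (intro mult_strict_left_mono) auto
  then show False using assms(2) by (simp add: power2_eq_square)
qed

lemma abs_prox_grad_le:
  assumes "0 < \<tau>" "s \<in> subdiff l x"
  shows "\<bar>prox_grad x \<tau>\<bar> \<le> \<bar>s\<bar>"
proof (rule abs_le_of_square_le)
  have "0 \<le> (prox_grad x \<tau> - s) * (prox x \<tau> - x)"
    by (rule subdiff_monotone[OF prox_grad_in_subdiff[OF assms(1)] assms(2)])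
  then have "0 \<le> \<tau> * (prox_grad x \<tau> * s - (prox_grad x \<tau>)\<^sup>2)"
    using assms(1) by (simp add: prox_eq algebra_simps power2_eq_square)
  then have "(prox_grad x \<tau>)\<^sup>2 \<le> prox_grad x \<tau> * s"
    using assms(1) by (simp add: zero_le_mult_iff)
  also have "\<dots> \<le> \<bar>prox_grad x \<tau>\<bar> * \<bar>s\<bar>" by (metis abs_ge_self abs_mult)
  finally show "(prox_grad x \<tau>)\<^sup>2 \<le> \<bar>prox_grad x \<tau>\<bar> * \<bar>s\<bar>" .
qed simp

lemma prox_grad_compare:
  assumes "0 < \<tau>" "0 < \<tau>'"
  shows "\<tau> * (prox_grad x \<tau> - prox_grad x \<tau>')\<^sup>2
    \<le> (\<tau>' - \<tau>) * prox_grad x \<tau>' * (prox_grad x \<tau> - prox_grad x \<tau>')"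
  using subdiff_monotone[OF prox_grad_in_subdiff[OF assms(1), of x] prox_grad_in_subdiff[OF assms(2), of x]]
  using assms by (simp add: prox_eq algebra_simps power2_eq_square)

lemma abs_prox_grad_antimono:
  assumes "0 < \<tau>" "\<tau> \<le> \<tau>'"
  shows "\<bar>prox_grad x \<tau>'\<bar> \<le> \<bar>prox_grad x \<tau>\<bar>"
proof (cases "\<tau> = \<tau>'")
  case False
  let ?s = "prox_grad x \<tau>" and ?s' = "prox_grad x \<tau>'"
  have "0 \<le> \<tau> * (?s - ?s')\<^sup>2" using assms by simp
  also have "\<dots> \<le> (\<tau>' - \<tau>) * ?s' * (?s - ?s')"
    using prox_grad_compare[of \<tau> \<tau>' x] assms by simp
  finally have "0 \<le> ?s' * (?s - ?s')"
    using assms False by (simp add: zero_le_mult_iff mult.assoc)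
  then have "?s'\<^sup>2 \<le> ?s' * ?s"
    by (simp add: algebra_simps power2_eq_square)
  also have "\<dots> \<le> \<bar>?s'\<bar> * \<bar>?s\<bar>" by (metis abs_ge_self abs_mult)
  finally show ?thesis by (rule abs_le_of_square_le[rotated]) simp
qed simp

lemma prox_grad_lipschitz:
  assumes "0 < \<tau>" "0 < \<tau>'" "s \<in> subdiff l x"
  shows "\<tau> * \<bar>prox_grad x \<tau> - prox_grad x \<tau>'\<bar> \<le> \<bar>\<tau>' - \<tau>\<bar> * \<bar>s\<bar>"
proof -
  let ?d = "\<bar>prox_grad x \<tau> - prox_grad x \<tau>'\<bar>"
  have "\<tau> * ?d\<^sup>2 \<le> (\<tau>' - \<tau>) * prox_grad x \<tau>' * (prox_grad x \<tau> - prox_grad x \<tau>')"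
    using prox_grad_compare[OF assms(1,2), of x] by simp
  also have "\<dots> \<le> (\<bar>\<tau>' - \<tau>\<bar> * \<bar>prox_grad x \<tau>'\<bar>) * ?d"
    by (metis abs_ge_self abs_mult)
  also have "\<dots> \<le> (\<bar>\<tau>' - \<tau>\<bar> * \<bar>s\<bar>) * ?d"
    using abs_prox_grad_le[OF assms(2,3)] by (intro mult_right_mono mult_left_mono) auto
  finally have le: "(\<tau> * ?d) * ?d \<le> (\<bar>\<tau>' - \<tau>\<bar> * \<bar>s\<bar>) * ?d"
    by (simp add: power2_eq_square mult.assoc)
  show ?thesis
  proof (cases "?d = 0")
    case False
    then show ?thesis using mult_right_le_imp_le[OF le] by simp
  qed simp
qed

lemma isCont_prox_grad:
  assumes "0 < \<tau>"
  shows "isCont (prox_grad x) \<tau>"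
proof -
  have "((\<lambda>t. prox_grad x t - prox_grad x \<tau>) \<longlongrightarrow> 0) (at \<tau>)"
  proof (rule Lim_null_comparison)
    have "\<forall>\<^sub>F t in at \<tau>. 0 < t"
      using order_tendstoD(1)[OF tendsto_ident_at assms] .
    then show "\<forall>\<^sub>F t in at \<tau>. norm (prox_grad x t - prox_grad x \<tau>) \<le> \<bar>t - \<tau>\<bar> * \<bar>rderiv x\<bar> / \<tau>"
    proof eventually_elim
      case (elim t)
      then show ?case
        using prox_grad_lipschitz[OF assms elim rderiv_in_subdiff] assms
        by (simp add: pos_le_divide_eq abs_minus_commute mult.commute)
    qed
    have "((\<lambda>t. \<bar>t - \<tau>\<bar> * \<bar>rderiv x\<bar> / \<tau>) \<longlongrightarrow> \<bar>\<tau> - \<tau>\<bar> * \<bar>rderiv x\<bar> / \<tau>) (at \<tau>)"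
      using assms by (intro tendsto_intros) auto
    then show "((\<lambda>t. \<bar>t - \<tau>\<bar> * \<bar>rderiv x\<bar> / \<tau>) \<longlongrightarrow> 0) (at \<tau>)" by simp
  qed
  then show ?thesis by (simp add: isCont_def LIM_zero_iff)
qed

text \<open>Evaluating the objective for \<open>\<tau>'\<close> at the proximal point for \<open>\<tau>\<close>.\<close>
lemma moreau_diff_le:
  assumes "0 < \<tau>" "0 < \<tau>'"
  shows "moreau l x \<tau>' - moreau l x \<tau> \<le> - (prox_grad x \<tau>)\<^sup>2 * \<tau> * (\<tau>' - \<tau>) / (2 * \<tau>')"
proof -
  have d: "x - prox x \<tau> = \<tau> * prox_grad x \<tau>" using assms by (simp add: prox_grad_def)
  have "prox_obj x \<tau>' (prox x \<tau>) - prox_obj x \<tau> (prox x \<tau>)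
      = (\<tau> * prox_grad x \<tau>)\<^sup>2 * (1 / (2 * \<tau>') - 1 / (2 * \<tau>))"
    unfolding prox_obj_def d by (simp add: algebra_simps)
  also have "\<dots> = - (prox_grad x \<tau>)\<^sup>2 * \<tau> * (\<tau>' - \<tau>) / (2 * \<tau>')"
    using assms by (simp add: field_simps power2_eq_square)
  finally have "prox_obj x \<tau>' (prox x \<tau>) - prox_obj x \<tau> (prox x \<tau>)
      = - (prox_grad x \<tau>)\<^sup>2 * \<tau> * (\<tau>' - \<tau>) / (2 * \<tau>')" .
  then show ?thesis
    using moreau_le_prox_obj[OF assms(2), of x "prox x \<tau>"] moreau_eq_prox_obj[OF assms(1), of x]
    by linarith
qed

lemma moreau_antimono:
  assumes "0 < \<tau>" "\<tau> \<le> \<tau>'"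
  shows "moreau l x \<tau>' \<le> moreau l x \<tau>"
proof -
  have "0 \<le> (prox_grad x \<tau>)\<^sup>2 * \<tau> * (\<tau>' - \<tau>) / (2 * \<tau>')"
    using assms by (intro divide_nonneg_pos mult_nonneg_nonneg) auto
  then show ?thesis using moreau_diff_le[of \<tau> \<tau>' x] assms by linarith
qed

lemma moreau_quotient_between:
  fixes x :: real
  assumes "0 < \<tau>" "0 < t" "t \<noteq> \<tau>"
  defines "b1 \<equiv> - (prox_grad x \<tau>)\<^sup>2 * \<tau> / (2 * t)" and "b2 \<equiv> - (prox_grad x t)\<^sup>2 * t / (2 * \<tau>)"
  shows "min b1 b2 \<le> (moreau l x t - moreau l x \<tau>) / (t - \<tau>)
    \<and> (moreau l x t - moreau l x \<tau>) / (t - \<tau>) \<le> max b1 b2"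
proof -
  have up: "moreau l x t - moreau l x \<tau> \<le> b1 * (t - \<tau>)"
    using moreau_diff_le[OF assms(1,2), of x] by (simp add: b1_def)
  have low: "b2 * (t - \<tau>) \<le> moreau l x t - moreau l x \<tau>"
    using moreau_diff_le[OF assms(2,1), of x] by (simp add: b2_def algebra_simps)
  show ?thesis
  proof (cases "\<tau> < t")
    case True
    then have "(moreau l x t - moreau l x \<tau>) / (t - \<tau>) \<le> b1" "b2 \<le> (moreau l x t - moreau l x \<tau>) / (t - \<tau>)"
      using up low by (simp_all add: divide_le_eq le_divide_eq)
    then show ?thesis by (auto simp: min_def max_def)
  next
    case False
    then have "t - \<tau> < 0" using assms(3) by simp
    then have "b1 \<le> (moreau l x t - moreau l x \<tau>) / (t - \<tau>)" "(moreau l x t - moreau l x \<tau>) / (t - \<tau>) \<le> b2"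
      using up low by (simp_all add: neg_divide_le_eq neg_le_divide_eq)
    then show ?thesis by (auto simp: min_def max_def)
  qed
qed

lemma moreau_has_derivative:
  assumes "0 < \<tau>"
  shows "((\<lambda>t. moreau l x t) has_real_derivative - (prox_grad x \<tau>)\<^sup>2 / 2) (at \<tau>)"
  unfolding has_field_derivative_iff
proof (rule tendsto_sandwich)
  let ?b1 = "\<lambda>t. - (prox_grad x \<tau>)\<^sup>2 * \<tau> / (2 * t)"
  let ?b2 = "\<lambda>t. - (prox_grad x t)\<^sup>2 * t / (2 * \<tau>)"
  have "\<forall>\<^sub>F t in at \<tau>. 0 < t \<and> t \<noteq> \<tau>"
    using order_tendstoD(1)[OF tendsto_ident_at assms] eventually_neq_at_within[of \<tau> \<tau>]
    by eventually_elim auto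
  then show "\<forall>\<^sub>F t in at \<tau>. min (?b1 t) (?b2 t) \<le> (moreau l x t - moreau l x \<tau>) / (t - \<tau>)"
    and "\<forall>\<^sub>F t in at \<tau>. (moreau l x t - moreau l x \<tau>) / (t - \<tau>) \<le> max (?b1 t) (?b2 t)"
    by (eventually_elim, use moreau_quotient_between[OF assms] in blast)+
  have "(?b1 \<longlongrightarrow> - (prox_grad x \<tau>)\<^sup>2 * \<tau> / (2 * \<tau>)) (at \<tau>)"
    using assms by (intro tendsto_intros) auto
  moreover have "(?b2 \<longlongrightarrow> - (prox_grad x \<tau>)\<^sup>2 * \<tau> / (2 * \<tau>)) (at \<tau>)"
    using assms isCont_prox_grad[OF assms, of x] unfolding isCont_def by (intro tendsto_intros) auto
  ultimately have "(?b1 \<longlongrightarrow> - (prox_grad x \<tau>)\<^sup>2 / 2) (at \<tau>)" "(?b2 \<longlongrightarrow> - (prox_grad x \<tau>)\<^sup>2 / 2) (at \<tau>)"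
    using assms by simp_all
  then show "((\<lambda>t. min (?b1 t) (?b2 t)) \<longlongrightarrow> - (prox_grad x \<tau>)\<^sup>2 / 2) (at \<tau>)"
    and "((\<lambda>t. max (?b1 t) (?b2 t)) \<longlongrightarrow> - (prox_grad x \<tau>)\<^sup>2 / 2) (at \<tau>)"
    using tendsto_min tendsto_max by fastforce+
qed

lemma abs_le_if_between:
  fixes q b1 b2 M :: real
  assumes "min b1 b2 \<le> q \<and> q \<le> max b1 b2" "\<bar>b1\<bar> \<le> M" "\<bar>b2\<bar> \<le> M"
  shows "\<bar>q\<bar> \<le> M"
  using assms by (auto simp: abs_le_iff min_def max_def split: if_splits)

lemma abs_moreau_quotient_le:
  assumes "0 < \<tau>" "\<tau> / 2 \<le> t" "t \<le> 2 * \<tau>" "t \<noteq> \<tau>" "s \<in> subdiff l x"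
  shows "\<bar>(moreau l x t - moreau l x \<tau>) / (t - \<tau>)\<bar> \<le> s\<^sup>2"
proof -
  have "0 < t" using assms by simp
  have sq: "(prox_grad x \<sigma>)\<^sup>2 \<le> s\<^sup>2" if "0 < \<sigma>" for \<sigma>
    using abs_prox_grad_le[OF that assms(5)] by (simp add: abs_le_square_iff)
  have "\<bar>- (prox_grad x \<tau>)\<^sup>2 * \<tau> / (2 * t)\<bar> = (prox_grad x \<tau>)\<^sup>2 * (\<tau> / (2 * t))"
    using assms \<open>0 < t\<close> by simp
  also have "\<dots> \<le> s\<^sup>2 * 1"
    using sq[OF assms(1)] assms \<open>0 < t\<close> by (intro mult_mono) (auto simp: divide_le_eq)
  finally have b1: "\<bar>- (prox_grad x \<tau>)\<^sup>2 * \<tau> / (2 * t)\<bar> \<le> s\<^sup>2" by simp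
  have "\<bar>- (prox_grad x t)\<^sup>2 * t / (2 * \<tau>)\<bar> = (prox_grad x t)\<^sup>2 * (t / (2 * \<tau>))"
    using assms \<open>0 < t\<close> by simp
  also have "\<dots> \<le> s\<^sup>2 * 1"
    using sq[OF \<open>0 < t\<close>] assms \<open>0 < t\<close> by (intro mult_mono) (auto simp: divide_le_eq)
  finally have b2: "\<bar>- (prox_grad x t)\<^sup>2 * t / (2 * \<tau>)\<bar> \<le> s\<^sup>2" by simp
  show ?thesis
    by (rule abs_le_if_between[OF moreau_quotient_between[OF assms(1) \<open>0 < t\<close> assms(4)] b1 b2])
qed

text \<open>Averaging the proximal points of two pairs \<open>(x, \<tau>)\<close> gives a feasible point for the averaged pair.\<close>
lemma moreau_convex:
  assumes "0 < t1" "0 < t2" "0 \<le> t" "t \<le> 1"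
  shows "moreau l ((1 - t) * x1 + t * x2) ((1 - t) * t1 + t * t2)
    \<le> (1 - t) * moreau l x1 t1 + t * moreau l x2 t2"
proof -
  define p1 p2 where "p1 = prox x1 t1" and "p2 = prox x2 t2"
  define \<sigma> where "\<sigma> = (1 - t) * t1 + t * t2"
  have "0 < \<sigma>" unfolding \<sigma>_def using assms by (cases "t = 0") (auto intro: add_nonneg_pos)
  have "moreau l ((1 - t) * x1 + t * x2) \<sigma> \<le> prox_obj ((1 - t) * x1 + t * x2) \<sigma> ((1 - t) * p1 + t * p2)"
    by (rule moreau_le_prox_obj[OF \<open>0 < \<sigma>\<close>])
  also have "\<dots> = ((1 - t) * (x1 - p1) + t * (x2 - p2))\<^sup>2 / \<sigma> / 2 + l ((1 - t) * p1 + t * p2)"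
    unfolding prox_obj_def by (simp add: algebra_simps)
  also have "\<dots> \<le> ((1 - t) * ((x1 - p1)\<^sup>2 / t1) + t * ((x2 - p2)\<^sup>2 / t2)) / 2 + ((1 - t) * l p1 + t * l p2)"
    using perspective_square_convex[OF assms, of "x1 - p1" "x2 - p2"] convex_onD[OF convex, of t p1 p2] assms
    unfolding \<sigma>_def by (intro add_mono divide_right_mono) auto
  also have "\<dots> = (1 - t) * prox_obj x1 t1 p1 + t * prox_obj x2 t2 p2"
    unfolding prox_obj_def using assms by (simp add: field_simps)
  also have "\<dots> = (1 - t) * moreau l x1 t1 + t * moreau l x2 t2"
    unfolding p1_def p2_def using assms by (simp add: moreau_eq_prox_obj)
  finally show ?thesis unfolding \<sigma>_def .
qed

lemma convex_on_moreau: "0 < \<tau> \<Longrightarrow> convex_on UNIV (\<lambda>x. moreau l x \<tau>)"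
  using moreau_convex[of \<tau> \<tau>] by (intro convex_onI) (auto simp: algebra_simps)

lemma borel_measurable_moreau [measurable]: "0 < \<tau> \<Longrightarrow> (\<lambda>x. moreau l x \<tau>) \<in> borel_measurable borel"
  using convex_on_continuous[OF open_UNIV convex_on_moreau] by (rule borel_measurable_continuous_onI)

lemma moreau_tendsto_at_right_0: "((\<lambda>\<tau>. moreau l x \<tau>) \<longlongrightarrow> l x) (at_right 0)"
proof (rule tendsto_sandwich)
  show "\<forall>\<^sub>F \<tau> in at_right 0. l x - \<tau> * (rderiv x)\<^sup>2 / 2 \<le> moreau l x \<tau>"
    using eventually_at_right_less[of 0] by eventually_elim (rule moreau_ge[OF _ rderiv_in_subdiff])
  show "\<forall>\<^sub>F \<tau> in at_right 0. moreau l x \<tau> \<le> l x"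
    using eventually_at_right_less[of 0] by eventually_elim (rule moreau_le)
  have "((\<lambda>\<tau>. l x - \<tau> * (rderiv x)\<^sup>2 / 2) \<longlongrightarrow> l x - 0 * (rderiv x)\<^sup>2 / 2) (at_right 0)"
    by (intro tendsto_intros) simp
  then show "((\<lambda>\<tau>. l x - \<tau> * (rderiv x)\<^sup>2 / 2) \<longlongrightarrow> l x) (at_right 0)" by simp
qed simp

lemma moreau_tendsto_at_top:
  assumes "l v0 = 0"
  shows "((\<lambda>\<tau>. moreau l x \<tau>) \<longlongrightarrow> 0) at_top"
proof (rule tendsto_sandwich)
  show "\<forall>\<^sub>F \<tau> in at_top. 0 \<le> moreau l x \<tau>"
    using eventually_gt_at_top[of 0] by eventually_elim (rule moreau_nonneg)
  have bound: "moreau l x \<tau> \<le> (x - v0)\<^sup>2 / 2 * inverse \<tau>" if "0 < \<tau>" for \<tau>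
    using moreau_le_prox_obj[OF that, of x v0] assms that by (simp add: prox_obj_def field_simps)
  show "\<forall>\<^sub>F \<tau> in at_top. moreau l x \<tau> \<le> (x - v0)\<^sup>2 / 2 * inverse \<tau>"
    using eventually_gt_at_top[of 0] by eventually_elim (rule bound)
  show "((\<lambda>\<tau>. (x - v0)\<^sup>2 / 2 * inverse \<tau>) \<longlongrightarrow> 0) at_top"
    by (intro tendsto_mult_right_zero tendsto_inverse_0_at_top filterlim_ident)
qed simp

lemma moreau_vec_sep_loss:
  assumes "0 < \<tau>"
  shows "moreau_vec m (sep_loss l m) x \<tau> = (\<Sum>j<m. moreau l (x j) \<tau>)"
proof -
  define F where "F v = 1 / (2 * \<tau>) * sqnorm m (\<lambda>j. x j - v j) + sep_loss l m v" for v
  have F: "F v = (\<Sum>j<m. prox_obj (x j) \<tau> (v j))" for v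
    unfolding F_def sqnorm_def sep_loss_def prox_obj_def by (simp add: sum_distrib_left sum.distrib)
  have lower: "(\<Sum>j<m. moreau l (x j) \<tau>) \<le> F v" for v
    unfolding F by (intro sum_mono moreau_le_prox_obj[OF assms])
  define p where "p j = (if j < m then prox (x j) \<tau> else 0)" for j
  have "p \<in> rvec m" unfolding p_def rvec_def by auto
  moreover have "F p = (\<Sum>j<m. moreau l (x j) \<tau>)"
    unfolding F p_def by (intro sum.cong) (simp_all add: moreau_eq_prox_obj[OF assms])
  ultimately have "(INF v\<in>rvec m. F v) = (\<Sum>j<m. moreau l (x j) \<tau>)"
    using lower by (intro antisym cINF_lower2 cINF_greatest bdd_belowI2) auto
  then show ?thesis unfolding moreau_vec_def F_def .
qed

lemma borel_measurable_prox_grad_square [measurable]: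
  assumes "0 < \<tau>"
  shows "(\<lambda>x. (prox_grad x \<tau>)\<^sup>2) \<in> borel_measurable borel"
proof -
  define h where "h n = \<tau> + inverse (real (Suc n))" for n
  have "filterlim h (at \<tau>) sequentially"
    unfolding h_def filterlim_at
    using tendsto_add[OF tendsto_const LIMSEQ_inverse_real_of_nat, of \<tau>] by simp
  then have "(\<lambda>n. (moreau l x (h n) - moreau l x \<tau>) / (h n - \<tau>)) \<longlonglongrightarrow> - (prox_grad x \<tau>)\<^sup>2 / 2" for x
    using moreau_has_derivative[OF assms, of x] unfolding has_field_derivative_iff
    by (rule filterlim_compose[rotated])
  moreover have "(\<lambda>x. (moreau l x (h n) - moreau l x \<tau>) / (h n - \<tau>)) \<in> borel_measurable borel" for n
    using assms by (simp add: h_def add_pos_pos)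
  ultimately have "(\<lambda>x. - (prox_grad x \<tau>)\<^sup>2 / 2) \<in> borel_measurable borel"
    by (rule borel_measurable_LIMSEQ_real[where u="\<lambda>n x. (moreau l x (h n) - moreau l x \<tau>) / (h n - \<tau>)"])
  then have "(\<lambda>x. - 2 * (- (prox_grad x \<tau>)\<^sup>2 / 2)) \<in> borel_measurable borel" by measurable
  then show ?thesis by simp
qed

end

section \<open>A weak law of large numbers\<close>

lemma (in product_prob_space) indep_vars_components:
  assumes "finite J" "J \<subseteq> I" "J \<noteq> {}"
  shows "P.indep_vars M (\<lambda>i \<omega>. \<omega> i) J"
proof (subst P.indep_vars_iff_distr_eq_PiM')
  show "distr (PiM I M) (PiM J M) (\<lambda>\<omega>. \<lambda>i\<in>J. \<omega> i) = PiM J (\<lambda>i. distr (PiM I M) (M i) (\<lambda>\<omega>. \<omega> i))"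
    using distr_PiM_restrict_finite[OF assms(1,2)] PiM_component assms(2)
    by (auto intro!: PiM_cong)
qed (use assms in auto)

lemma (in product_prob_space) distr_component_compose:
  assumes "i \<in> I" "f \<in> measurable (M i) N"
  shows "distr (PiM I M) N (\<lambda>\<omega>. f (\<omega> i)) = distr (M i) N f"
proof -
  have "distr (PiM I M) N (\<lambda>\<omega>. f (\<omega> i)) = distr (distr (PiM I M) (M i) (\<lambda>\<omega>. \<omega> i)) N f"
    using assms by (subst distr_distr) (auto simp: comp_def)
  then show ?thesis using PiM_component[OF assms(1)] by simp
qed

lemma iid_average_concentration:
  fixes f :: "'a \<Rightarrow> real"
  assumes Q: "prob_space Q" and f: "f \<in> borel_measurable Q" "\<And>y. \<bar>f y\<bar> \<le> K"
    and "0 < K" "0 < m" "0 \<le> \<epsilon>"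
  defines "N \<equiv> PiM (UNIV :: nat set) (\<lambda>_. Q)"
  shows "measure N {\<omega> \<in> space N. \<epsilon> \<le> \<bar>(\<Sum>j<m. f (\<omega> j)) / real m - (\<integral>y. f y \<partial>Q)\<bar>}
    \<le> 2 * exp (- 2 * real m * \<epsilon>\<^sup>2 / (2 * K)\<^sup>2)"
proof -
  interpret product_prob_space "\<lambda>_::nat. Q" UNIV
    by (simp add: product_prob_space_def product_prob_space_axioms_def
        product_sigma_finite_def Q prob_space_imp_sigma_finite)
  have [measurable]: "f \<in> borel_measurable Q" by (fact f)
  have distr_f: "distr (PiM UNIV (\<lambda>_. Q)) borel (\<lambda>\<omega>. f (\<omega> j)) = distr Q borel f" for j :: nat
    using distr_component_compose[of j f borel] f(1) by simp
  interpret H: Hoeffding_ineq_iid "PiM (UNIV :: nat set) (\<lambda>_. Q)" "{..<m}" "\<lambda>j \<omega>. f (\<omega> j)"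
    "\<lambda>\<omega>. f (\<omega> 0)" "- K" K "\<integral>y. f y \<partial>Q"
  proof unfold_locales
    show "P.indep_vars (\<lambda>_. borel) (\<lambda>j \<omega>. f (\<omega> j)) {..<m}"
      using P.indep_vars_compose2[OF indep_vars_components[of "{..<m}"], where Y="\<lambda>_. f" and N="\<lambda>_. borel"]
        \<open>0 < m\<close> by (simp add: lessThan_empty_iff)
    show "distr (PiM UNIV (\<lambda>_. Q)) borel (\<lambda>\<omega>. f (\<omega> j)) = distr (PiM UNIV (\<lambda>_. Q)) borel (\<lambda>\<omega>. f (\<omega> (0 :: nat)))"
      for j :: nat
      unfolding distr_f ..
    have "f y \<in> {- K..K}" for y using f(2)[of y] by auto
    then show "AE \<omega> in PiM UNIV (\<lambda>_. Q). f (\<omega> (0 :: nat)) \<in> {- K..K}" by simp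
    have "(\<integral>y. f y \<partial>Q) = P.expectation (\<lambda>\<omega>. f (\<omega> (0 :: nat)))"
      using integral_distr[of "\<lambda>\<omega>. \<omega> (0 :: nat)" "PiM UNIV (\<lambda>_. Q)" Q f] PiM_component[of 0] by simp
    then show "(\<integral>y. f y \<partial>Q) \<equiv> P.expectation (\<lambda>\<omega>. f (\<omega> (0 :: nat)))" by (rule eq_reflection)
  qed simp_all
  have "(2 * K)\<^sup>2 = (K - - K)\<^sup>2" by simp
  then show ?thesis
    using H.Hoeffding_ineq_abs_ge'[OF \<open>0 \<le> \<epsilon>\<close>] \<open>0 < K\<close> \<open>0 < m\<close> by (simp add: N_def lessThan_empty_iff)
qed

lemma (in product_prob_space) integrable_component:
  fixes f :: "'a \<Rightarrow> real"
  assumes "i \<in> I" "integrable (M i) f"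
  shows "integrable (PiM I M) (\<lambda>\<omega>. f (\<omega> i))" and "(\<integral>\<omega>. f (\<omega> i) \<partial>PiM I M) = (\<integral>y. f y \<partial>M i)"
  using integrable_distr_eq[of "\<lambda>\<omega>. \<omega> i" "PiM I M" "M i" f] integral_distr[of "\<lambda>\<omega>. \<omega> i" "PiM I M" "M i" f]
    PiM_component[OF assms(1)] assms by auto

lemma iid_average_markov:
  fixes f :: "'a \<Rightarrow> real"
  assumes Q: "prob_space Q" and f: "integrable Q f" and "0 < m" "0 < \<epsilon>"
  defines "N \<equiv> PiM (UNIV :: nat set) (\<lambda>_. Q)"
  shows "measure N {\<omega> \<in> space N. \<epsilon> \<le> \<bar>(\<Sum>j<m. f (\<omega> j)) / real m - (\<integral>y. f y \<partial>Q)\<bar>}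
    \<le> 2 * (\<integral>y. \<bar>f y\<bar> \<partial>Q) / \<epsilon>"
proof -
  interpret product_prob_space "\<lambda>_::nat. Q" UNIV
    by (simp add: product_prob_space_def product_prob_space_axioms_def
        product_sigma_finite_def Q prob_space_imp_sigma_finite)
  let ?dev = "\<lambda>\<omega>. \<bar>(\<Sum>j<m. f (\<omega> j)) / real m - (\<integral>y. f y \<partial>Q)\<bar>"
  let ?bound = "\<lambda>\<omega>. (\<Sum>j<m. \<bar>f (\<omega> j)\<bar>) / real m + (\<integral>y. \<bar>f y\<bar> \<partial>Q)"
  note component = integrable_component[OF UNIV_I f] integrable_component[OF UNIV_I integrable_abs[OF f]]
  have "measure N {\<omega> \<in> space N. \<epsilon> \<le> ?dev \<omega>} \<le> (\<integral>\<omega>. ?dev \<omega> \<partial>N) / \<epsilon>"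
    using component \<open>0 < \<epsilon>\<close> unfolding N_def by (intro integral_Markov_inequality_measure) auto
  also have "(\<integral>\<omega>. ?dev \<omega> \<partial>N) \<le> (\<integral>\<omega>. ?bound \<omega> \<partial>N)"
  proof (intro integral_mono)
    show "?dev \<omega> \<le> ?bound \<omega>" for \<omega>
      using sum_abs[of "\<lambda>j. f (\<omega> j)" "{..<m}"] integral_abs_bound[of Q f] \<open>0 < m\<close>
      by (auto simp: abs_div intro!: abs_triangle_ineq4[THEN order_trans] add_mono divide_right_mono)
  qed (use component in \<open>auto simp: N_def\<close>)
  also have "(\<integral>\<omega>. ?bound \<omega> \<partial>N) = 2 * (\<integral>y. \<bar>f y\<bar> \<partial>Q)"
    using component \<open>0 < m\<close> by (simp add: N_def P.prob_space)
  finally show ?thesis using \<open>0 < \<epsilon>\<close> by (simp add: divide_right_mono)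
qed

lemma tendsto_zero_by_approximation:
  fixes p b :: "nat \<Rightarrow> real" and a :: "nat \<Rightarrow> nat \<Rightarrow> real"
  assumes "\<And>m. 0 \<le> p m" and "\<And>K. \<forall>\<^sub>F m in sequentially. p m \<le> a K m + b K"
    and "\<And>K. a K \<longlonglongrightarrow> 0" and "b \<longlonglongrightarrow> 0"
  shows "p \<longlonglongrightarrow> 0"
proof (rule order_tendstoI)
  fix r :: real assume "0 < r"
  then have "\<forall>\<^sub>F K in sequentially. b K < r / 2"
    using order_tendstoD(2)[OF assms(4), of "r / 2"] by simp
  then obtain K where K: "b K < r / 2"
    by (metis eventually_sequentially order_refl)
  have "\<forall>\<^sub>F m in sequentially. a K m < r / 2"
    using order_tendstoD(2)[OF assms(3), of "r / 2" K] \<open>0 < r\<close> by simp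
  with assms(2)[of K] show "\<forall>\<^sub>F m in sequentially. p m < r"
    by eventually_elim (use K in linarith)
next
  fix r :: real assume "r < 0"
  then show "\<forall>\<^sub>F m in sequentially. r < p m"
    using assms(1) by (intro always_eventually allI) (rule less_le_trans)
qed

definition clamp :: "real \<Rightarrow> real \<Rightarrow> real" where
  "clamp K y = max (- K) (min K y)"

lemma borel_measurable_clamp [measurable]: "clamp K \<in> borel_measurable borel"
  unfolding clamp_def by measurable

lemma clamp_truncation_error_tendsto_0:
  fixes Y :: "'a \<Rightarrow> real"
  assumes "integrable Q Y"
  shows "(\<lambda>K. \<integral>y. \<bar>Y y - clamp (real K) (Y y)\<bar> \<partial>Q) \<longlonglongrightarrow> 0"
proof -
  have "(\<lambda>K. \<integral>y. \<bar>Y y - clamp (real K) (Y y)\<bar> \<partial>Q) \<longlonglongrightarrow> (\<integral>y. 0 \<partial>Q)"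
  proof (rule integral_dominated_convergence[where w="\<lambda>y. \<bar>Y y\<bar>"])
    show "AE y in Q. (\<lambda>K. \<bar>Y y - clamp (real K) (Y y)\<bar>) \<longlonglongrightarrow> 0"
    proof (intro AE_I2 tendsto_eventually eventually_sequentiallyI)
      fix y and K :: nat assume "nat \<lceil>\<bar>Y y\<bar>\<rceil> \<le> K"
      then have "\<bar>Y y\<bar> \<le> real K" by linarith
      then show "\<bar>Y y - clamp (real K) (Y y)\<bar> = 0" by (auto simp: clamp_def)
    qed
  qed (use assms in \<open>auto simp: clamp_def\<close>)
  then show ?thesis by simp
qed

lemma iid_average_deviation_split:
  fixes T R :: "'a \<Rightarrow> real" and m :: nat
  assumes Q: "prob_space Q" and T: "integrable Q T" and R: "integrable Q R"
  defines "N \<equiv> PiM (UNIV :: nat set) (\<lambda>_. Q)"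
    and "dev \<equiv> \<lambda>f \<omega>. \<bar>(\<Sum>j<m. f (\<omega> j)) / real m - (\<integral>y. f y \<partial>Q)\<bar>"
  shows "measure N {\<omega> \<in> space N. \<epsilon> < dev (\<lambda>y. T y + R y) \<omega>}
    \<le> measure N {\<omega> \<in> space N. \<epsilon> / 2 \<le> dev T \<omega>} + measure N {\<omega> \<in> space N. \<epsilon> / 2 \<le> dev R \<omega>}"
proof -
  interpret product_prob_space "\<lambda>_::nat. Q" UNIV
    by (simp add: product_prob_space_def product_prob_space_axioms_def
        product_sigma_finite_def Q prob_space_imp_sigma_finite)
  have [measurable]: "T \<in> borel_measurable Q" "R \<in> borel_measurable Q" using T R by auto
  have "dev (\<lambda>y. T y + R y) \<omega> \<le> dev T \<omega> + dev R \<omega>" for \<omega>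
    unfolding dev_def using T R by (simp add: sum.distrib add_divide_distrib)
  then have "{\<omega> \<in> space N. \<epsilon> < dev (\<lambda>y. T y + R y) \<omega>}
      \<subseteq> {\<omega> \<in> space N. \<epsilon> / 2 \<le> dev T \<omega>} \<union> {\<omega> \<in> space N. \<epsilon> / 2 \<le> dev R \<omega>}"
    by (smt (verit, best) Collect_mono_iff Un_iff field_sum_of_halves mem_Collect_eq subset_eq)
  then have "measure N {\<omega> \<in> space N. \<epsilon> < dev (\<lambda>y. T y + R y) \<omega>}
      \<le> measure N ({\<omega> \<in> space N. \<epsilon> / 2 \<le> dev T \<omega>} \<union> {\<omega> \<in> space N. \<epsilon> / 2 \<le> dev R \<omega>})"
    unfolding N_def dev_def by (intro P.finite_measure_mono) measurable
  also have "\<dots> \<le> measure N {\<omega> \<in> space N. \<epsilon> / 2 \<le> dev T \<omega>} + measure N {\<omega> \<in> space N. \<epsilon> / 2 \<le> dev R \<omega>}"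
    unfolding N_def dev_def by (intro measure_Un_le) measurable
  finally show ?thesis .
qed

lemma iid_average_truncation_bound:
  fixes Y :: "'a \<Rightarrow> real"
  assumes Q: "prob_space Q" and Y: "integrable Q Y" and "0 < K" "0 < m" "0 < \<epsilon>"
  defines "N \<equiv> PiM (UNIV :: nat set) (\<lambda>_. Q)"
  shows "measure N {\<omega> \<in> space N. \<epsilon> < \<bar>(\<Sum>j<m. Y (\<omega> j)) / real m - (\<integral>y. Y y \<partial>Q)\<bar>}
    \<le> 2 * exp (- 2 * real m * (\<epsilon> / 2)\<^sup>2 / (2 * K)\<^sup>2) + 2 * (\<integral>y. \<bar>Y y - clamp K (Y y)\<bar> \<partial>Q) / (\<epsilon> / 2)"
proof -
  define T R where "T = (\<lambda>y. clamp K (Y y))" and "R = (\<lambda>y. Y y - clamp K (Y y))"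
  define dev where "dev f \<omega> = \<bar>(\<Sum>j<m. f (\<omega> j)) / real m - (\<integral>y. f y \<partial>Q)\<bar>" for f \<omega>
  have [measurable]: "Y \<in> borel_measurable Q" using Y by simp
  have T: "T \<in> borel_measurable Q" "\<bar>T y\<bar> \<le> K" for y
    unfolding T_def by measurable (use \<open>0 < K\<close> in \<open>simp add: clamp_def\<close>)
  have intT: "integrable Q T"
    using Q T by (intro finite_measure.integrable_const_bound[where B=K]) (auto simp: prob_space_def)
  have intR: "integrable Q R"
    unfolding R_def using Y intT[unfolded T_def] by auto
  have "measure N {\<omega> \<in> space N. \<epsilon> < dev Y \<omega>}
      \<le> measure N {\<omega> \<in> space N. \<epsilon> / 2 \<le> dev T \<omega>} + measure N {\<omega> \<in> space N. \<epsilon> / 2 \<le> dev R \<omega>}"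
    using iid_average_deviation_split[OF Q intT intR, where m=m and \<epsilon>=\<epsilon>]
    unfolding N_def dev_def by (simp add: T_def R_def)
  also have "\<dots> \<le> 2 * exp (- 2 * real m * (\<epsilon> / 2)\<^sup>2 / (2 * K)\<^sup>2) + 2 * (\<integral>y. \<bar>R y\<bar> \<partial>Q) / (\<epsilon> / 2)"
    unfolding N_def dev_def using \<open>0 < K\<close> \<open>0 < m\<close> \<open>0 < \<epsilon>\<close>
    by (intro add_mono iid_average_concentration[OF Q T] iid_average_markov[OF Q intR]) auto
  finally show ?thesis unfolding dev_def R_def .
qed

lemma exp_linear_tendsto_0: "c < 0 \<Longrightarrow> (\<lambda>m. exp (c * real m)) \<longlonglongrightarrow> 0"
  by (intro filterlim_compose[OF exp_at_bot] filterlim_tendsto_neg_mult_at_bot[OF tendsto_const]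
      filterlim_real_sequentially)

theorem weak_law_of_large_numbers:
  fixes Y :: "'a \<Rightarrow> real"
  assumes Q: "prob_space Q" and Y: "integrable Q Y"
  shows "conv_in_prob (PiM UNIV (\<lambda>_::nat. Q)) (\<lambda>m \<omega>. (\<Sum>j<m. Y (\<omega> j)) / real m) (\<integral>y. Y y \<partial>Q)"
  unfolding conv_in_prob_def
proof (intro conjI allI impI)
  have [measurable]: "Y \<in> borel_measurable Q" using Y by simp
  show "(\<lambda>\<omega>. (\<Sum>j<m. Y (\<omega> j)) / real m) \<in> borel_measurable (PiM UNIV (\<lambda>_::nat. Q))" for m
    by measurable
  fix \<epsilon> :: real assume "0 < \<epsilon>"
  let ?K = "\<lambda>K. real (Suc K)"
  show "(\<lambda>m. measure (PiM UNIV (\<lambda>_. Q)) {\<omega> \<in> space (PiM UNIV (\<lambda>_. Q)).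
      \<epsilon> < \<bar>(\<Sum>j<m. Y (\<omega> j)) / real m - (\<integral>y. Y y \<partial>Q)\<bar>}) \<longlonglongrightarrow> 0"
  proof (rule tendsto_zero_by_approximation)
    show "\<forall>\<^sub>F m in sequentially. measure (PiM UNIV (\<lambda>_. Q)) {\<omega> \<in> space (PiM UNIV (\<lambda>_. Q)).
        \<epsilon> < \<bar>(\<Sum>j<m. Y (\<omega> j)) / real m - (\<integral>y. Y y \<partial>Q)\<bar>}
      \<le> 2 * exp ((- 2 * (\<epsilon> / 2)\<^sup>2 / (2 * ?K K)\<^sup>2) * real m)
        + 2 * (\<integral>y. \<bar>Y y - clamp (?K K) (Y y)\<bar> \<partial>Q) / (\<epsilon> / 2)" for K
      using iid_average_truncation_bound[OF Q Y, of "?K K" _ \<epsilon>] \<open>0 < \<epsilon>\<close>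
      by (intro eventually_sequentiallyI[of 1]) (simp add: ac_simps)
    show "(\<lambda>m. 2 * exp ((- 2 * (\<epsilon> / 2)\<^sup>2 / (2 * ?K K)\<^sup>2) * real m)) \<longlonglongrightarrow> 0" for K
    proof -
      have "- 2 * (\<epsilon> / 2)\<^sup>2 / (2 * ?K K)\<^sup>2 < 0" using \<open>0 < \<epsilon>\<close> by simp
      from tendsto_mult_right_zero[OF exp_linear_tendsto_0[OF this], of 2] show ?thesis .
    qed
    show "(\<lambda>K. 2 * (\<integral>y. \<bar>Y y - clamp (?K K) (Y y)\<bar> \<partial>Q) / (\<epsilon> / 2)) \<longlonglongrightarrow> 0"
      using tendsto_divide_zero[OF tendsto_mult_right_zero[OF LIMSEQ_Suc[OF clamp_truncation_error_tendsto_0[OF Y]]]]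
      by simp
  qed simp
qed
section \<open>Limits of integrals\<close>

lemma integral_dominated_convergence_at:
  fixes f :: "'b::first_countable_topology \<Rightarrow> 'a \<Rightarrow> real"
  assumes "\<forall>\<^sub>F t in at a within S. f t \<in> borel_measurable M" and "g \<in> borel_measurable M"
    and "integrable M w" and "\<forall>\<^sub>F t in at a within S. \<forall>x\<in>space M. \<bar>f t x\<bar> \<le> w x"
    and "AE x in M. ((\<lambda>t. f t x) \<longlongrightarrow> g x) (at a within S)"
  shows "((\<lambda>t. \<integral>x. f t x \<partial>M) \<longlongrightarrow> (\<integral>x. g x \<partial>M)) (at a within S)"
proof (subst tendsto_at_iff_sequentially, intro allI impI)
  fix X assume "\<forall>i. X i \<in> S - {a}" "X \<longlonglongrightarrow> a"
  then have X: "filterlim X (at a within S) sequentially"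
    by (simp add: filterlim_at)
  obtain k where k: "\<And>n. k \<le> n \<Longrightarrow> f (X n) \<in> borel_measurable M \<and> (\<forall>x\<in>space M. \<bar>f (X n) x\<bar> \<le> w x)"
    using filterlim_iff[THEN iffD1, OF X, rule_format, OF eventually_conj[OF assms(1,4)]]
    by (auto simp: eventually_sequentially)
  show "((\<lambda>t. \<integral>x. f t x \<partial>M) \<circ> X) \<longlonglongrightarrow> (\<integral>x. g x \<partial>M)"
    unfolding comp_def
  proof (rule LIMSEQ_offset[where k=k], rule integral_dominated_convergence[where w=w])
    show "AE x in M. (\<lambda>n. f (X (n + k)) x) \<longlonglongrightarrow> g x"
      using assms(5) by eventually_elim (rule LIMSEQ_ignore_initial_segment filterlim_compose[OF _ X])+
  qed (use assms k in auto)
qed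

lemma integral_dominated_convergence_eventually_at_top:
  fixes f :: "real \<Rightarrow> 'a \<Rightarrow> real"
  assumes "\<forall>\<^sub>F t in at_top. f t \<in> borel_measurable M" and "g \<in> borel_measurable M"
    and "integrable M w" and "\<forall>\<^sub>F t in at_top. \<forall>x\<in>space M. \<bar>f t x\<bar> \<le> w x"
    and "AE x in M. ((\<lambda>t. f t x) \<longlongrightarrow> g x) at_top"
  shows "((\<lambda>t. \<integral>x. f t x \<partial>M) \<longlongrightarrow> (\<integral>x. g x \<partial>M)) at_top"
  using integral_dominated_convergence_at[where a=0 and S="{0<..}" and f="\<lambda>t. f (inverse t)" and M=M] assms
  unfolding filterlim_at_top_to_right eventually_at_top_to_right by simp

lemma nn_integral_eq_infinity_if_not_integrable:
  fixes f :: "'a \<Rightarrow> real"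
  assumes "f \<in> borel_measurable M" "\<And>x. 0 \<le> f x" "\<not> integrable M f"
  shows "(\<integral>\<^sup>+x. ennreal (f x) \<partial>M) = \<infinity>"
proof -
  have "\<not> (\<integral>\<^sup>+x. ennreal (norm (f x)) \<partial>M) < \<infinity>"
    using assms(1,3) integrableI_bounded by blast
  then show ?thesis using assms(2) by (simp add: less_top[symmetric])
qed

lemma filterlim_at_top_if_mono_on_Suc:
  fixes A :: "real \<Rightarrow> real"
  assumes "\<And>\<tau> \<tau>'. 0 < \<tau> \<Longrightarrow> \<tau> \<le> \<tau>' \<Longrightarrow> A \<tau> \<le> A \<tau>'"
    and "filterlim (\<lambda>n. A (real (Suc n))) at_top sequentially"
  shows "filterlim A at_top at_top"
  unfolding filterlim_at_top
proof
  fix Z :: real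
  obtain n where n: "Z \<le> A (real (Suc n))"
    using assms(2) unfolding filterlim_at_top eventually_sequentially by blast
  have "Z \<le> A \<tau>" if "real (Suc n) \<le> \<tau>" for \<tau>
    using n assms(1)[of "real (Suc n)" \<tau>] that by simp
  then show "\<forall>\<^sub>F \<tau> in at_top. Z \<le> A \<tau>"
    by (rule eventually_mono[OF eventually_ge_at_top])
qed

lemma eventually_at_right_0_lt_1: "\<forall>\<^sub>F \<tau> in at_right 0. 0 < \<tau> \<and> \<tau> < (1::real)"
  unfolding eventually_at_right_field by (intro exI[of _ 1]) auto

section \<open>The Gaussian model\<close>

lemma convex_upper_half_plane: "convex {p :: real \<times> real. 0 < snd p}"
proof (rule convexI)
  fix x y :: "real \<times> real" and u v :: real
  assume "x \<in> {p. 0 < snd p}" "y \<in> {p. 0 < snd p}" "0 \<le> u" "0 \<le> v" "u + v = 1"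
  then show "u *\<^sub>R x + v *\<^sub>R y \<in> {p. 0 < snd p}"
    by (cases "u = 0") (auto intro: add_pos_nonneg)
qed

lemma prob_space_gauss: "prob_space gauss"
  unfolding gauss_def by (rule prob_space_normal_density) simp

lemma sets_gauss [measurable_cong]: "sets gauss = sets borel"
  unfolding gauss_def by simp

lemma integrable_gauss_square: "integrable gauss (\<lambda>g. g\<^sup>2)"
  unfolding gauss_def
  by (subst integrable_density) (auto simp: normal_density_nonneg intro: integrable_std_normal_moment)

lemma abs_mult_sum_le_sum_squares: "\<bar>g\<bar> * (\<bar>a\<bar> + \<bar>b\<bar>) \<le> g\<^sup>2 + a\<^sup>2 + (b::real)\<^sup>2"
  using sum_squares_bound[of "\<bar>g\<bar>" "\<bar>a\<bar>"] sum_squares_bound[of "\<bar>g\<bar>" "\<bar>b\<bar>"]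
    zero_le_power2[of a] zero_le_power2[of b]
  by (simp only: distrib_left power2_abs)

locale loss_model = nonneg_convex_real_fun +
  fixes PZ :: "real measure"
  assumes prob_space_PZ: "prob_space PZ" and sets_PZ [measurable_cong]: "sets PZ = sets borel"
    and has_zero: "\<exists>v. l v = 0"
    and moment: "\<And>c. (\<integral>\<^sup>+p. ennreal ((dplus l (c * snd p + fst p))\<^sup>2) \<partial>ZG PZ) < \<infinity>"
begin

abbreviation obs :: "real \<Rightarrow> real \<times> real \<Rightarrow> real" where
  "obs c p \<equiv> c * snd p + fst p"

sublocale pair_prob_space PZ gauss
  using prob_space_PZ prob_space_gauss by (simp add: pair_prob_space_def pair_sigma_finite_def prob_space_imp_sigma_finite)

lemma prob_space_ZG: "prob_space (ZG PZ)"
  unfolding ZG_def by (rule P.prob_space_axioms)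

lemma sets_ZG [measurable_cong]: "sets (ZG PZ) = sets (borel \<Otimes>\<^sub>M borel)"
  unfolding ZG_def by (rule sets_pair_measure_cong[OF sets_PZ sets_gauss])

lemma distr_ZG_fst: "distr (ZG PZ) PZ fst = PZ"
  unfolding ZG_def by (rule M2.distr_pair_fst)

lemma distr_ZG_snd: "distr (ZG PZ) gauss snd = gauss"
proof -
  have "distr (ZG PZ) gauss snd = distr (distr (gauss \<Otimes>\<^sub>M PZ) (PZ \<Otimes>\<^sub>M gauss) (\<lambda>(x, y). (y, x))) gauss snd"
    unfolding ZG_def by (subst distr_pair_swap) simp
  also have "\<dots> = distr (gauss \<Otimes>\<^sub>M PZ) gauss fst"
    by (subst distr_distr) (auto simp: comp_def case_prod_beta)
  finally show ?thesis using M1.distr_pair_fst by simp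
qed

lemma nn_integral_ZG_fst: "(\<integral>\<^sup>+p. ennreal (l (fst p)) \<partial>ZG PZ) = (\<integral>\<^sup>+z. ennreal (l z) \<partial>PZ)"
  using nn_integral_distr[of fst "ZG PZ" PZ "\<lambda>z. ennreal (l z)"] distr_ZG_fst by (simp add: ZG_def)

lemma integrable_snd_square: "integrable (ZG PZ) (\<lambda>p. (snd p)\<^sup>2)"
  using integrable_distr_eq[of snd "ZG PZ" gauss "\<lambda>g. g\<^sup>2"] distr_ZG_snd integrable_gauss_square
  by (simp add: ZG_def)

lemma integrable_rderiv_square: "integrable (ZG PZ) (\<lambda>p. (rderiv (obs c p))\<^sup>2)"
proof (rule integrableI_bounded)
  have "(rderiv v)\<^sup>2 \<le> (dplus l v)\<^sup>2" for v
    using subdiff_abs_le_dplus[OF rderiv_in_subdiff, of v] by (metis abs_ge_zero power2_abs power_mono)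
  then have "(\<integral>\<^sup>+p. ennreal (norm ((rderiv (obs c p))\<^sup>2)) \<partial>ZG PZ) \<le> (\<integral>\<^sup>+p. ennreal ((dplus l (obs c p))\<^sup>2) \<partial>ZG PZ)"
    by (intro nn_integral_mono ennreal_leI) simp
  then show "(\<integral>\<^sup>+p. ennreal (norm ((rderiv (obs c p))\<^sup>2)) \<partial>ZG PZ) < \<infinity>"
    using moment[of c] by (rule le_less_trans)
qed measurable

lemma integrable_loss_increment: "integrable (ZG PZ) (\<lambda>p. l (obs c p) - l (fst p))"
proof (rule Bochner_Integration.integrable_bound)
  show "integrable (ZG PZ) (\<lambda>p. \<bar>c\<bar> * ((snd p)\<^sup>2 + (rderiv (obs c p))\<^sup>2 + (rderiv (fst p))\<^sup>2))"
    using integrable_snd_square integrable_rderiv_square[of c] integrable_rderiv_square[of 0] by auto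
  show "AE p in ZG PZ. norm (l (obs c p) - l (fst p))
      \<le> norm (\<bar>c\<bar> * ((snd p)\<^sup>2 + (rderiv (obs c p))\<^sup>2 + (rderiv (fst p))\<^sup>2))"
  proof (intro AE_I2)
    fix p :: "real \<times> real"
    have "\<bar>l (obs c p) - l (fst p)\<bar> \<le> \<bar>c\<bar> * (\<bar>snd p\<bar> * (\<bar>rderiv (obs c p)\<bar> + \<bar>rderiv (fst p)\<bar>))"
      using abs_diff_le_rderiv[of "obs c p" "fst p"] by (simp add: abs_mult mult.assoc)
    also have "\<dots> \<le> \<bar>c\<bar> * ((snd p)\<^sup>2 + (rderiv (obs c p))\<^sup>2 + (rderiv (fst p))\<^sup>2)"
      by (intro mult_left_mono abs_mult_sum_le_sum_squares) simp_all
    finally show "norm (l (obs c p) - l (fst p))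
        \<le> norm (\<bar>c\<bar> * ((snd p)\<^sup>2 + (rderiv (obs c p))\<^sup>2 + (rderiv (fst p))\<^sup>2))"
      by simp
  qed
qed measurable

lemma integrable_moreau_minus_loss:
  "0 < \<tau> \<Longrightarrow> integrable (ZG PZ) (\<lambda>p. moreau l (obs c p) \<tau> - l (obs c p))"
  using abs_moreau_minus_le
  by (intro Bochner_Integration.integrable_bound[OF integrable_mult_right[OF integrable_rderiv_square, of "\<tau> / 2" c]])
    (auto intro!: AE_I2)

lemma integrable_moreau_increment:
  "0 < \<tau> \<Longrightarrow> integrable (ZG PZ) (\<lambda>p. moreau l (obs c p) \<tau> - l (fst p))"
  using Bochner_Integration.integrable_add[OF integrable_moreau_minus_loss integrable_loss_increment, of \<tau> c c]
  by simp

lemma Lfun_split: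
  assumes "0 < \<tau>"
  shows "Lfun l PZ c \<tau> = (\<integral>p. moreau l (obs c p) \<tau> - l (obs c p) \<partial>ZG PZ) + (\<integral>p. l (obs c p) - l (fst p) \<partial>ZG PZ)"
  unfolding Lfun_def
  using Bochner_Integration.integral_add[OF integrable_moreau_minus_loss[OF assms] integrable_loss_increment, of c c]
  by simp

lemma Lfun_convex_combination:
  assumes "0 < t1" "0 < t2" "0 \<le> t" "t \<le> 1"
  shows "Lfun l PZ ((1 - t) * c1 + t * c2) ((1 - t) * t1 + t * t2) \<le> (1 - t) * Lfun l PZ c1 t1 + t * Lfun l PZ c2 t2"
proof -
  let ?F = "\<lambda>c \<tau> p. moreau l (obs c p) \<tau> - l (fst p)"
  have "0 < (1 - t) * t1 + t * t2" using assms by (cases "t = 0") (auto intro: add_nonneg_pos)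
  have "Lfun l PZ ((1 - t) * c1 + t * c2) ((1 - t) * t1 + t * t2)
      \<le> (\<integral>p. (1 - t) * ?F c1 t1 p + t * ?F c2 t2 p \<partial>ZG PZ)"
    unfolding Lfun_def
  proof (rule integral_mono)
    show "integrable (ZG PZ) (?F ((1 - t) * c1 + t * c2) ((1 - t) * t1 + t * t2))"
      by (rule integrable_moreau_increment) fact
    show "integrable (ZG PZ) (\<lambda>p. (1 - t) * ?F c1 t1 p + t * ?F c2 t2 p)"
      using integrable_moreau_increment[OF assms(1), of c1] integrable_moreau_increment[OF assms(2), of c2]
      by auto
    show "?F ((1 - t) * c1 + t * c2) ((1 - t) * t1 + t * t2) p \<le> (1 - t) * ?F c1 t1 p + t * ?F c2 t2 p" for p
    proof -
      have "obs ((1 - t) * c1 + t * c2) p = (1 - t) * obs c1 p + t * obs c2 p"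
        by (simp add: algebra_simps)
      then show ?thesis using moreau_convex[OF assms, of "obs c1 p" "obs c2 p"] by (simp add: algebra_simps)
    qed
  qed
  also have "\<dots> = (1 - t) * Lfun l PZ c1 t1 + t * Lfun l PZ c2 t2"
    unfolding Lfun_def using integrable_moreau_increment[OF assms(1)] integrable_moreau_increment[OF assms(2)]
    by simp
  finally show ?thesis .
qed

lemma convex_on_Lfun: "convex_on {p :: real \<times> real. 0 < snd p} (\<lambda>p. Lfun l PZ (fst p) (snd p))"
  by (rule convex_onI[OF _ convex_upper_half_plane]) (use Lfun_convex_combination in auto)

lemma continuous_on_Lfun: "continuous_on {p :: real \<times> real. 0 < snd p} (\<lambda>p. Lfun l PZ (fst p) (snd p))"
  by (rule convex_on_continuous[OF _ convex_on_Lfun]) (intro open_Collect_less continuous_intros)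

lemma Lfun_tendsto_at_right_0:
  "((\<lambda>\<tau>. Lfun l PZ c \<tau>) \<longlongrightarrow> (\<integral>p. l (obs c p) - l (fst p) \<partial>ZG PZ)) (at_right 0)"
  unfolding Lfun_def
proof (rule integral_dominated_convergence_at)
  show "\<forall>\<^sub>F \<tau> in at_right 0. (\<lambda>p. moreau l (obs c p) \<tau> - l (fst p)) \<in> borel_measurable (ZG PZ)"
    using eventually_at_right_0_lt_1 by eventually_elim measurable
  show "integrable (ZG PZ) (\<lambda>p. (rderiv (obs c p))\<^sup>2 / 2 + \<bar>l (obs c p) - l (fst p)\<bar>)"
    using integrable_rderiv_square[of c] integrable_loss_increment[of c] by auto
  show "\<forall>\<^sub>F \<tau> in at_right 0. \<forall>p\<in>space (ZG PZ). \<bar>moreau l (obs c p) \<tau> - l (fst p)\<bar>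
      \<le> (rderiv (obs c p))\<^sup>2 / 2 + \<bar>l (obs c p) - l (fst p)\<bar>"
    using eventually_at_right_0_lt_1
  proof eventually_elim
    case (elim \<tau>)
    have "\<tau> * (rderiv x)\<^sup>2 / 2 \<le> (rderiv x)\<^sup>2 / 2" for x
      using elim by (simp add: mult_left_le_one_le)
    then show ?case
      using abs_moreau_minus_le[of \<tau>] elim by (smt (verit))
  qed
  show "AE p in ZG PZ. ((\<lambda>\<tau>. moreau l (obs c p) \<tau> - l (fst p)) \<longlongrightarrow> l (obs c p) - l (fst p)) (at_right 0)"
    by (intro AE_I2 tendsto_diff moreau_tendsto_at_right_0 tendsto_const)
qed measurable

lemma Lfun_0_tendsto_at_right_0: "((\<lambda>\<tau>. Lfun l PZ 0 \<tau>) \<longlongrightarrow> 0) (at_right 0)"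
  using Lfun_tendsto_at_right_0[of 0] by simp

lemma nonneg_integral_loss_fst: "0 \<le> (\<integral>p. l (fst p) \<partial>ZG PZ)"
  using nonneg by (intro integral_nonneg_AE) auto

lemma Lfun_lower_bound:
  assumes "0 < \<tau>"
  shows "- enn2ereal (\<integral>\<^sup>+z. ennreal (l z) \<partial>PZ) \<le> ereal (Lfun l PZ c \<tau>)"
proof (cases "integrable (ZG PZ) (\<lambda>p. l (fst p))")
  case True
  then have "(\<integral>\<^sup>+z. ennreal (l z) \<partial>PZ) = ennreal (\<integral>p. l (fst p) \<partial>ZG PZ)"
    using nn_integral_ZG_fst nn_integral_eq_integral[OF True] nonneg by simp
  moreover have "Lfun l PZ c \<tau> = (\<integral>p. moreau l (obs c p) \<tau> \<partial>ZG PZ) - (\<integral>p. l (fst p) \<partial>ZG PZ)"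
    using Bochner_Integration.integrable_add[OF integrable_moreau_increment[OF assms, of c] True]
    unfolding Lfun_def by (subst Bochner_Integration.integral_diff) (use True in auto)
  moreover have "0 \<le> (\<integral>p. moreau l (obs c p) \<tau> \<partial>ZG PZ)"
    using moreau_nonneg[OF assms] by (intro integral_nonneg_AE) auto
  ultimately show ?thesis using nonneg_integral_loss_fst by simp
next
  case False
  have "(\<integral>\<^sup>+p. ennreal (l (fst p)) \<partial>ZG PZ) = \<infinity>"
    using False nonneg by (intro nn_integral_eq_infinity_if_not_integrable) auto
  then show ?thesis using nn_integral_ZG_fst by simp
qed

definition Lfun_0_deriv :: "real \<Rightarrow> real" where
  "Lfun_0_deriv \<tau> = (\<integral>p. - (prox_grad (fst p) \<tau>)\<^sup>2 / 2 \<partial>ZG PZ)"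

lemma integrable_prox_grad_square:
  assumes "0 < \<tau>"
  shows "integrable (ZG PZ) (\<lambda>p. - (prox_grad (fst p) \<tau>)\<^sup>2 / 2)"
proof (rule Bochner_Integration.integrable_bound)
  show "integrable (ZG PZ) (\<lambda>p. (rderiv (fst p))\<^sup>2 / 2)"
    using integrable_rderiv_square[of 0] by simp
  show "AE p in ZG PZ. norm (- (prox_grad (fst p) \<tau>)\<^sup>2 / 2) \<le> norm ((rderiv (fst p))\<^sup>2 / 2)"
    using abs_prox_grad_le[OF assms rderiv_in_subdiff] by (intro AE_I2) (simp add: abs_le_square_iff)
qed (use assms in measurable)

lemma Lfun_0_has_derivative:
  assumes "0 < \<tau>"
  shows "((\<lambda>t. Lfun l PZ 0 t) has_real_derivative Lfun_0_deriv \<tau>) (at \<tau>)"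
proof -
  let ?q = "\<lambda>t p. (moreau l (fst p) t - moreau l (fst p) \<tau>) / (t - \<tau>)"
  have quotient: "(Lfun l PZ 0 t - Lfun l PZ 0 \<tau>) / (t - \<tau>) = (\<integral>p. ?q t p \<partial>ZG PZ)" if "0 < t" for t
  proof -
    have "Lfun l PZ 0 t - Lfun l PZ 0 \<tau>
        = (\<integral>p. (moreau l (fst p) t - l (fst p)) - (moreau l (fst p) \<tau> - l (fst p)) \<partial>ZG PZ)"
      using integrable_moreau_increment[OF that, of 0] integrable_moreau_increment[OF assms, of 0]
      unfolding Lfun_def by (subst Bochner_Integration.integral_diff) auto
    then show ?thesis by simp
  qed
  have near: "\<forall>\<^sub>F t in at \<tau> within {0<..}. \<tau> / 2 \<le> t \<and> t \<le> 2 * \<tau> \<and> t \<noteq> \<tau> \<and> 0 < t"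
    unfolding eventually_at using assms
    by (intro exI[of _ "\<tau> / 2"]) (auto simp: dist_real_def abs_less_iff split: abs_split)
  have "((\<lambda>t. \<integral>p. ?q t p \<partial>ZG PZ) \<longlongrightarrow> Lfun_0_deriv \<tau>) (at \<tau> within {0<..})"
    unfolding Lfun_0_deriv_def
  proof (rule integral_dominated_convergence_at[where w="\<lambda>p. (rderiv (fst p))\<^sup>2"])
    show "\<forall>\<^sub>F t in at \<tau> within {0<..}. ?q t \<in> borel_measurable (ZG PZ)"
      using near by eventually_elim (use assms in measurable)
    show "\<forall>\<^sub>F t in at \<tau> within {0<..}. \<forall>p\<in>space (ZG PZ). \<bar>?q t p\<bar> \<le> (rderiv (fst p))\<^sup>2"
      using near by eventually_elim (use abs_moreau_quotient_le[OF assms _ _ _ rderiv_in_subdiff] in blast)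
    show "AE p in ZG PZ. ((\<lambda>t. ?q t p) \<longlongrightarrow> - (prox_grad (fst p) \<tau>)\<^sup>2 / 2) (at \<tau> within {0<..})"
    proof (rule AE_I2)
      fix p :: "real \<times> real"
      have "((\<lambda>t. ?q t p) \<longlongrightarrow> - (prox_grad (fst p) \<tau>)\<^sup>2 / 2) (at \<tau>)"
        using moreau_has_derivative[OF assms, of "fst p"] unfolding has_field_derivative_iff .
      then show "((\<lambda>t. ?q t p) \<longlongrightarrow> - (prox_grad (fst p) \<tau>)\<^sup>2 / 2) (at \<tau> within {0<..})"
        by (rule tendsto_within_subset) simp
    qed
  qed (use integrable_rderiv_square[of 0] assms in auto)
  then have "((\<lambda>t. (Lfun l PZ 0 t - Lfun l PZ 0 \<tau>) / (t - \<tau>)) \<longlongrightarrow> Lfun_0_deriv \<tau>) (at \<tau> within {0<..})"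
    by (rule Lim_transform_within[OF _ zero_less_one]) (auto simp: quotient)
  then show ?thesis
    using at_within_open[of \<tau> "{0<..}"] assms by (simp add: has_field_derivative_iff)
qed

lemma Lfun_0_deriv_mono:
  assumes "0 < \<tau>" "\<tau> \<le> \<tau>'"
  shows "Lfun_0_deriv \<tau> \<le> Lfun_0_deriv \<tau>'"
  unfolding Lfun_0_deriv_def
proof (rule integral_mono)
  show "- (prox_grad (fst p) \<tau>)\<^sup>2 / 2 \<le> - (prox_grad (fst p) \<tau>')\<^sup>2 / 2" for p
    using abs_prox_grad_antimono[OF assms, of "fst p"] by (simp add: abs_le_square_iff)
qed (use assms integrable_prox_grad_square in auto)

lemma Lfun_0_deriv_bounds:
  assumes "0 < \<tau>"
  shows "- (\<integral>p. (rderiv (fst p))\<^sup>2 / 2 \<partial>ZG PZ) \<le> Lfun_0_deriv \<tau>" and "Lfun_0_deriv \<tau> \<le> 0"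
proof -
  have "(\<integral>p. - ((rderiv (fst p))\<^sup>2 / 2) \<partial>ZG PZ) \<le> Lfun_0_deriv \<tau>"
    unfolding Lfun_0_deriv_def using integrable_rderiv_square[of 0] integrable_prox_grad_square[OF assms]
      abs_prox_grad_le[OF assms rderiv_in_subdiff]
    by (intro integral_mono) (auto simp: abs_le_square_iff)
  then show "- (\<integral>p. (rderiv (fst p))\<^sup>2 / 2 \<partial>ZG PZ) \<le> Lfun_0_deriv \<tau>" by simp
  have "0 \<le> (\<integral>p. (prox_grad (fst p) \<tau>)\<^sup>2 / 2 \<partial>ZG PZ)" by (intro integral_nonneg_AE) auto
  then show "Lfun_0_deriv \<tau> \<le> 0" unfolding Lfun_0_deriv_def by simp
qed

lemma Lfun_0_deriv_tendsto_at_right_0: "\<exists>d. (Lfun_0_deriv \<longlongrightarrow> d) (at_right 0) \<and> d \<le> 0"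
proof -
  have "(Lfun_0_deriv \<longlongrightarrow> Inf (Lfun_0_deriv ` ({0<..} \<inter> UNIV))) (at 0 within {0<..} \<inter> UNIV)"
    using Lfun_0_deriv_mono Lfun_0_deriv_bounds(1) by (intro Lim_right_bound) auto
  then have lim: "(Lfun_0_deriv \<longlongrightarrow> Inf (Lfun_0_deriv ` {0<..})) (at_right 0)" by simp
  moreover have "Inf (Lfun_0_deriv ` {0<..}) \<le> 0"
    using eventually_at_right_0_lt_1 Lfun_0_deriv_bounds(2)
    by (intro tendsto_upperbound[OF lim _ trivial_limit_at_right_real]) (auto elim: eventually_mono)
  ultimately show ?thesis by blast
qed

lemma integrable_loss_fst_iff:
  "integrable (ZG PZ) (\<lambda>p. l (obs c p)) \<longleftrightarrow> integrable (ZG PZ) (\<lambda>p. l (fst p))"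
proof
  assume "integrable (ZG PZ) (\<lambda>p. l (obs c p))"
  from Bochner_Integration.integrable_diff[OF this integrable_loss_increment[of c]]
  show "integrable (ZG PZ) (\<lambda>p. l (fst p))" by simp
next
  assume "integrable (ZG PZ) (\<lambda>p. l (fst p))"
  from Bochner_Integration.integrable_add[OF this integrable_loss_increment[of c]]
  show "integrable (ZG PZ) (\<lambda>p. l (obs c p))" by simp
qed

lemma Lfun_tendsto_at_top_integrable:
  assumes "integrable (ZG PZ) (\<lambda>p. l (fst p))"
  shows "((\<lambda>\<tau>. Lfun l PZ c \<tau>) \<longlongrightarrow> - (\<integral>p. l (fst p) \<partial>ZG PZ)) at_top"
proof -
  obtain v0 where "l v0 = 0" using has_zero by blast
  have int_obs: "integrable (ZG PZ) (\<lambda>p. l (obs c p))" using assms integrable_loss_fst_iff by blast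
  have int_moreau: "integrable (ZG PZ) (\<lambda>p. moreau l (obs c p) \<tau>)" if "0 < \<tau>" for \<tau>
    using Bochner_Integration.integrable_add[OF integrable_moreau_increment[OF that, of c] assms] by simp
  have "((\<lambda>\<tau>. \<integral>p. moreau l (obs c p) \<tau> \<partial>ZG PZ) \<longlongrightarrow> (\<integral>p. 0 \<partial>ZG PZ)) at_top"
  proof (rule integral_dominated_convergence_eventually_at_top[where w="\<lambda>p. l (obs c p)"])
    show "\<forall>\<^sub>F \<tau> in at_top. (\<lambda>p. moreau l (obs c p) \<tau>) \<in> borel_measurable (ZG PZ)"
      using eventually_gt_at_top[of 0] by eventually_elim measurable
    show "\<forall>\<^sub>F \<tau> in at_top. \<forall>p\<in>space (ZG PZ). \<bar>moreau l (obs c p) \<tau>\<bar> \<le> l (obs c p)"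
      using eventually_gt_at_top[of 0] by eventually_elim (simp add: moreau_nonneg moreau_le)
    show "AE p in ZG PZ. ((\<lambda>\<tau>. moreau l (obs c p) \<tau>) \<longlongrightarrow> 0) at_top"
      using moreau_tendsto_at_top[OF \<open>l v0 = 0\<close>] by simp
  qed (use int_obs in simp_all)
  then have "((\<lambda>\<tau>. (\<integral>p. moreau l (obs c p) \<tau> \<partial>ZG PZ) - (\<integral>p. l (fst p) \<partial>ZG PZ))
      \<longlongrightarrow> 0 - (\<integral>p. l (fst p) \<partial>ZG PZ)) at_top"
    by (intro tendsto_diff tendsto_const) simp
  moreover have "\<forall>\<^sub>F \<tau> in at_top.
      (\<integral>p. moreau l (obs c p) \<tau> \<partial>ZG PZ) - (\<integral>p. l (fst p) \<partial>ZG PZ) = Lfun l PZ c \<tau>"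
    using eventually_gt_at_top[of 0]
    by eventually_elim (use int_moreau assms in \<open>simp add: Lfun_def Bochner_Integration.integral_diff\<close>)
  ultimately show ?thesis by (simp add: tendsto_cong)
qed

lemma integral_loss_minus_moreau_at_top:
  assumes "\<not> integrable (ZG PZ) (\<lambda>p. l (fst p))"
  shows "filterlim (\<lambda>\<tau>. \<integral>p. l (obs c p) - moreau l (obs c p) \<tau> \<partial>ZG PZ) at_top at_top"
proof (rule filterlim_at_top_if_mono_on_Suc)
  have int: "integrable (ZG PZ) (\<lambda>p. l (obs c p) - moreau l (obs c p) \<tau>)" if "0 < \<tau>" for \<tau>
    using integrable_minus[OF integrable_moreau_minus_loss[OF that, of c]] by simp
  show "(\<integral>p. l (obs c p) - moreau l (obs c p) \<tau> \<partial>ZG PZ) \<le> (\<integral>p. l (obs c p) - moreau l (obs c p) \<tau>' \<partial>ZG PZ)"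
    if "0 < \<tau>" "\<tau> \<le> \<tau>'" for \<tau> \<tau>'
    using int that moreau_antimono[OF that] by (intro integral_mono) auto
  obtain v0 where "l v0 = 0" using has_zero by blast
  let ?f = "\<lambda>n p. ennreal (l (obs c p) - moreau l (obs c p) (real (Suc n)))"
  have "(\<lambda>n. \<integral>\<^sup>+p. ?f n p \<partial>ZG PZ) \<longlonglongrightarrow> (\<integral>\<^sup>+p. ennreal (l (obs c p)) \<partial>ZG PZ)"
  proof (rule nn_integral_LIMSEQ)
    show "incseq ?f"
      by (intro incseq_SucI le_funI ennreal_leI diff_left_mono moreau_antimono) auto
    have "(\<lambda>n. moreau l (obs c p) (real (Suc n))) \<longlonglongrightarrow> 0" for p
      using filterlim_compose[OF moreau_tendsto_at_top[OF \<open>l v0 = 0\<close>] filterlim_real_sequentially]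
      by (rule LIMSEQ_Suc)
    then have "(\<lambda>n. l (obs c p) - moreau l (obs c p) (real (Suc n))) \<longlonglongrightarrow> l (obs c p) - 0" for p
      by (intro tendsto_diff tendsto_const)
    then show "(\<lambda>n. ?f n p) \<longlonglongrightarrow> ennreal (l (obs c p))" for p
      by (intro tendsto_ennrealI) simp
  qed measurable
  moreover have "(\<integral>\<^sup>+p. ennreal (l (obs c p)) \<partial>ZG PZ) = \<infinity>"
    using assms integrable_loss_fst_iff nonneg by (intro nn_integral_eq_infinity_if_not_integrable) auto
  moreover have "(\<integral>\<^sup>+p. ?f n p \<partial>ZG PZ) = ennreal (\<integral>p. l (obs c p) - moreau l (obs c p) (real (Suc n)) \<partial>ZG PZ)"
    for n
    using int[of "real (Suc n)"] by (intro nn_integral_eq_integral) (auto simp: moreau_le)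
  ultimately show "filterlim (\<lambda>n. \<integral>p. l (obs c p) - moreau l (obs c p) (real (Suc n)) \<partial>ZG PZ) at_top sequentially"
    by (simp add: ennreal_tendsto_top_eq_at_top[symmetric])
qed

lemma Lfun_tendsto_at_top:
  "((\<lambda>\<tau>. ereal (Lfun l PZ c \<tau>)) \<longlongrightarrow> - enn2ereal (\<integral>\<^sup>+z. ennreal (l z) \<partial>PZ)) at_top"
proof (cases "integrable (ZG PZ) (\<lambda>p. l (fst p))")
  case True
  then have "(\<integral>\<^sup>+z. ennreal (l z) \<partial>PZ) = ennreal (\<integral>p. l (fst p) \<partial>ZG PZ)"
    using nn_integral_ZG_fst nn_integral_eq_integral[OF True] nonneg by simp
  then show ?thesis
    using Lfun_tendsto_at_top_integrable[OF True, of c] nonneg_integral_loss_fst by simp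
next
  case False
  define K where "K = (\<integral>p. l (obs c p) - l (fst p) \<partial>ZG PZ)"
  have "filterlim (\<lambda>\<tau>. - K + (\<integral>p. l (obs c p) - moreau l (obs c p) \<tau> \<partial>ZG PZ)) at_top at_top"
    by (rule filterlim_tendsto_add_at_top[OF tendsto_const integral_loss_minus_moreau_at_top[OF False]])
  then have lim: "filterlim (\<lambda>\<tau>. - (- K + (\<integral>p. l (obs c p) - moreau l (obs c p) \<tau> \<partial>ZG PZ))) at_bot at_top"
    by (simp only: filterlim_uminus_at_top)
  have ev: "\<forall>\<^sub>F \<tau> in at_top. - (- K + (\<integral>p. l (obs c p) - moreau l (obs c p) \<tau> \<partial>ZG PZ)) = Lfun l PZ c \<tau>"
    using eventually_gt_at_top[of 0]
    by eventually_elim (simp add: Lfun_split K_def integral_minus[symmetric])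
  have "filterlim (\<lambda>\<tau>. Lfun l PZ c \<tau>) at_bot at_top"
    using filterlim_cong[OF refl refl ev] lim by simp
  moreover have "(\<integral>\<^sup>+p. ennreal (l (fst p)) \<partial>ZG PZ) = \<infinity>"
    using False nonneg by (intro nn_integral_eq_infinity_if_not_integrable) auto
  ultimately show ?thesis
    using ereal_tendsto_simps2(3)[of "\<lambda>\<tau>. Lfun l PZ c \<tau>"] nn_integral_ZG_fst by (simp add: comp_def)
qed

lemma Lfun_div_tendsto_at_top: "((\<lambda>\<tau>. Lfun l PZ c \<tau> / \<tau>) \<longlongrightarrow> 0) at_top"
proof -
  obtain v0 where "l v0 = 0" using has_zero by blast
  define K where "K = (\<integral>p. l (obs c p) - l (fst p) \<partial>ZG PZ)"
  have "((\<lambda>\<tau>. \<integral>p. (moreau l (obs c p) \<tau> - l (obs c p)) / \<tau> \<partial>ZG PZ) \<longlongrightarrow> (\<integral>p. 0 \<partial>ZG PZ)) at_top"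
  proof (rule integral_dominated_convergence_eventually_at_top[where w="\<lambda>p. (rderiv (obs c p))\<^sup>2 / 2"])
    show "\<forall>\<^sub>F \<tau> in at_top. (\<lambda>p. (moreau l (obs c p) \<tau> - l (obs c p)) / \<tau>) \<in> borel_measurable (ZG PZ)"
      using eventually_gt_at_top[of 0] by eventually_elim measurable
    show "\<forall>\<^sub>F \<tau> in at_top. \<forall>p\<in>space (ZG PZ). \<bar>(moreau l (obs c p) \<tau> - l (obs c p)) / \<tau>\<bar> \<le> (rderiv (obs c p))\<^sup>2 / 2"
      using eventually_gt_at_top[of 0]
      by eventually_elim (use abs_moreau_minus_le in \<open>simp add: abs_div divide_le_eq mult.commute\<close>)
    have "((\<lambda>\<tau>. (moreau l (obs c p) \<tau> - l (obs c p)) * inverse \<tau>) \<longlongrightarrow> (0 - l (obs c p)) * 0) at_top" for p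
      by (intro tendsto_mult tendsto_diff moreau_tendsto_at_top[OF \<open>l v0 = 0\<close>] tendsto_const
          tendsto_inverse_0_at_top filterlim_ident)
    then show "AE p in ZG PZ. ((\<lambda>\<tau>. (moreau l (obs c p) \<tau> - l (obs c p)) / \<tau>) \<longlongrightarrow> 0) at_top"
      by (simp add: divide_inverse)
  qed (use integrable_rderiv_square[of c] in simp_all)
  moreover have "((\<lambda>\<tau>. K * inverse \<tau>) \<longlongrightarrow> 0) at_top"
    by (intro tendsto_mult_right_zero tendsto_inverse_0_at_top filterlim_ident)
  ultimately have "((\<lambda>\<tau>. (\<integral>p. (moreau l (obs c p) \<tau> - l (obs c p)) / \<tau> \<partial>ZG PZ) + K * inverse \<tau>) \<longlongrightarrow> 0) at_top"
    using tendsto_add by fastforce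
  moreover have "\<forall>\<^sub>F \<tau> in at_top. (\<integral>p. (moreau l (obs c p) \<tau> - l (obs c p)) / \<tau> \<partial>ZG PZ) + K * inverse \<tau>
      = Lfun l PZ c \<tau> / \<tau>"
    using eventually_gt_at_top[of 0]
    by eventually_elim (simp add: Lfun_split K_def divide_inverse distrib_right)
  ultimately show ?thesis by (rule Lim_transform_eventually)
qed

lemma Lfun_empirical_conv_in_prob:
  assumes "0 < \<tau>"
  shows "conv_in_prob (iidZG PZ)
    (\<lambda>m \<omega>. (moreau_vec m (sep_loss l m) (\<lambda>j. obs c (\<omega> j)) \<tau> - sep_loss l m (\<lambda>j. fst (\<omega> j))) / real m)
    (Lfun l PZ c \<tau>)"
proof -
  have "(\<lambda>m \<omega>. (moreau_vec m (sep_loss l m) (\<lambda>j. obs c (\<omega> j)) \<tau> - sep_loss l m (\<lambda>j. fst (\<omega> j))) / real m)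
      = (\<lambda>m \<omega>. (\<Sum>j<m. moreau l (obs c (\<omega> j)) \<tau> - l (fst (\<omega> j))) / real m)"
    by (simp add: moreau_vec_sep_loss[OF assms] sep_loss_def sum_subtractf)
  then show ?thesis
    using weak_law_of_large_numbers[OF prob_space_ZG integrable_moreau_increment[OF assms, of c]]
    by (simp add: iidZG_def Lfun_def)
qed

end

theorem lemma4p1:
  fixes l :: "real \<Rightarrow> real" and PZ :: "real measure"
  assumes conv: "convex_on UNIV l"
    and nonneg: "\<And>v. l v \<ge> 0"
    and minzero: "\<exists>v. l v = 0"
    and PZ: "prob_space PZ" "sets PZ = sets borel"
    and moment: "\<And>c. (\<integral>\<^sup>+p. ennreal ((dplus l (c * snd p + fst p))\<^sup>2) \<partial>ZG PZ) < \<infinity>"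
  shows
    "((\<forall>c. \<forall>\<tau>>0. integrable (ZG PZ) (\<lambda>p. moreau l (c * snd p + fst p) \<tau> - l (fst p)))
     \<and> convex_on {p :: real \<times> real. snd p > 0} (\<lambda>p. Lfun l PZ (fst p) (snd p))
     \<and> continuous_on {p :: real \<times> real. snd p > 0} (\<lambda>p. Lfun l PZ (fst p) (snd p)))
     \<and> (\<forall>c. \<forall>\<tau>>0. conv_in_prob (iidZG PZ)
        (\<lambda>m \<omega>. (moreau_vec m (sep_loss l m) (\<lambda>j. c * snd (\<omega> j) + fst (\<omega> j)) \<tau>
                 - sep_loss l m (\<lambda>j. fst (\<omega> j))) / real m)
        (Lfun l PZ c \<tau>))
     \<and> (\<forall>c. integrable (ZG PZ) (\<lambda>p. l (c * snd p + fst p) - l (fst p))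
        \<and> ((\<lambda>\<tau>. Lfun l PZ c \<tau>) \<longlongrightarrow> (\<integral>p. (l (c * snd p + fst p) - l (fst p)) \<partial>ZG PZ)) (at_right 0))
     \<and> (((\<lambda>\<tau>. Lfun l PZ 0 \<tau>) \<longlongrightarrow> 0) (at_right 0))
     \<and> (\<exists>D d. (\<forall>\<tau>>0. ((\<lambda>t. Lfun l PZ 0 t) has_real_derivative D \<tau>) (at \<tau>))
        \<and> (D \<longlongrightarrow> d) (at_right 0) \<and> d \<le> 0)
     \<and> (\<forall>c. ((\<lambda>\<tau>. ereal (Lfun l PZ c \<tau>)) \<longlongrightarrow> - enn2ereal (\<integral>\<^sup>+z. ennreal (l z) \<partial>PZ)) at_top)
     \<and> (\<forall>c. \<forall>\<tau>>0. ereal (Lfun l PZ c \<tau>) \<ge> - enn2ereal (\<integral>\<^sup>+z. ennreal (l z) \<partial>PZ))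
     \<and> (\<forall>c. ((\<lambda>\<tau>. Lfun l PZ c \<tau> / \<tau>) \<longlongrightarrow> 0) at_top)"
proof -
  have "loss_model l PZ"
    unfolding loss_model_def loss_model_axioms_def nonneg_convex_real_fun_def nonneg_convex_real_fun_axioms_def
      convex_real_fun_def
    using conv nonneg minzero PZ moment by blast
  then interpret loss_model l PZ .
  obtain d where "(Lfun_0_deriv \<longlongrightarrow> d) (at_right 0)" "d \<le> 0"
    using Lfun_0_deriv_tendsto_at_right_0 by blast
  then have derivative: "\<exists>D d. (\<forall>\<tau>>0. ((\<lambda>t. Lfun l PZ 0 t) has_real_derivative D \<tau>) (at \<tau>))
      \<and> (D \<longlongrightarrow> d) (at_right 0) \<and> d \<le> 0"
    using Lfun_0_has_derivative by blast
  show ?thesis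
    using convex_on_Lfun continuous_on_Lfun Lfun_0_tendsto_at_right_0 derivative
    by (intro conjI allI impI integrable_moreau_increment Lfun_empirical_conv_in_prob
        integrable_loss_increment Lfun_tendsto_at_right_0 Lfun_tendsto_at_top Lfun_lower_bound
        Lfun_div_tendsto_at_top) simp_all
qed

end
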